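(* Let $m\ge1$, $\mathbf x=(x_1,\dots,x_{m+1})$, $\mathbf y=(y_1,\dots,y_{m+1})$. The partition function $Z_{\mathrm{HT}}(2m+1;\mathbf x,\mathbf y)$ is symmetric in $x_1,\dots,x_m$ and (separately) symmetric in $y_1,\dots,y_m$. Moreover, if $y_1=ax_1$, then \[ Z_{\mathrm{HT}}(2m+1;\mathbf x,\mathbf y)=\sigma^2(a^2)\,\sigma(a\bar x_1y_{m+1})\,\sigma(a\bar x_{m+1}y_1)\prod_{i=2}^m\big[\sigma^2(a\bar x_1y_i)\,\sigma^2(a\bar x_iy_1)\big]\,Z_{\mathrm{HT}}\big(2m-1;(x_2,\dots,x_{m+1}),(y_2,\dots,y_{m+1})\big). \]
   Context: Notation: $\bar z=z^{-1}$, $\sigma(z)=z-z^{-1}$; $a$ is a fixed nonzero parameter. Vertex weights: at a vertex where a horizontal and a vertical line cross, the four incident edges are oriented with exactly two pointing in. Type 1: horizontal edges in, vertical out; type 2: horizontal out, vertical in; type 3: horizontal right, vertical up; type 4: horizontal left, vertical down; type 5: horizontal left, vertical up; type 6: horizontal right, vertical down. A vertex with spectral parameter $z$ has weight $\sigma(a^2)$ (types 1,2), $\sigma(az)$ (types 3,4), $\sigma(a\bar z)$ (types 5,6). A state is an orientation of internal edges satisfying the two-in rule at every vertex; the partition function is the sum over states of the product of vertex weights. Odd half-turn model $Z_{\mathrm{HT}}(2m+1;\mathbf x,\mathbf y)$ (for $\mathbf x,\mathbf y$ of length $m+1$, $m\ge0$): vertices $(r,j)$ with $1\le r\le 2m+1$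 (from the top), $1\le j\le m$ (from the left), and $(r,m+1)$ with $m+2\le r\le 2m+1$; vertex $(r,j)$ has parameter $x_{\min(r,2m+2-r)}\bar y_j$. Edges join consecutive vertices in rows and columns. Left boundary edges point right (into the grid), top boundary edges of columns $1,\dots,m$ point up, bottom boundary edges of columns $1,\dots,m+1$ point down. The edge to the right of $(m+1,m)$ and the edge above $(m+2,m+1)$ form a single edge, pointing right out of $(m+1,m)$ iff pointing down into $(m+2,m+1)$. For each $r\le m$ the edges to the right of $(r,m)$ and of $(2m+2-r,m+1)$ form a single edge with one orientation (out of one vertex, into the other). For $m=0$ there are no vertices and $Z_{\mathrm{HT}}(1)=1$. *)

theory Defs
  imports Complex_Main "HOL-Combinatorics.Permutations"
begin

definition sig :: "complex \<Rightarrow> complex" where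
  "sig z = z - inverse z"

text \<open>Vertices of the odd half-turn grid of size 2m+1: pairs (row, column),
  rows counted from the top, columns from the left.\<close>
definition ht_verts :: "nat \<Rightarrow> (nat \<times> nat) set" where
  "ht_verts m = {(r,j). 1 \<le> r \<and> r \<le> 2*m+1 \<and> 1 \<le> j \<and> j \<le> m}
              \<union> {(r,j). m+2 \<le> r \<and> r \<le> 2*m+1 \<and> j = m+1}"

text \<open>H: (r,j) \<in> H iff the edge immediately to the right of vertex (r,j) (j \<le> m) points right.
  U: (r,j) \<in> U iff the edge immediately above vertex (r,j) points up
     (only for edges not fixed by the boundary or identified with a horizontal edge).\<close>
definition ht_Hdom :: "nat \<Rightarrow> (nat \<times> nat) set" where
  "ht_Hdom m = {(r,j). 1 \<le> r \<and> r \<le> 2*m+1 \<and> 1 \<le> j \<and> j \<le> m}"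

definition ht_Udom :: "nat \<Rightarrow> (nat \<times> nat) set" where
  "ht_Udom m = {(r,j). 2 \<le> r \<and> r \<le> 2*m+1 \<and> 1 \<le> j \<and> j \<le> m}
             \<union> {(r,j). m+3 \<le> r \<and> r \<le> 2*m+1 \<and> j = m+1}"

definition ht_states :: "nat \<Rightarrow> ((nat \<times> nat) set \<times> (nat \<times> nat) set) set" where
  "ht_states m = Pow (ht_Hdom m) \<times> Pow (ht_Udom m)"

definition left_right :: "(nat \<times> nat) set \<Rightarrow> nat \<Rightarrow> nat \<Rightarrow> bool" where
  "left_right H r j = (if j = 1 then True else (r, j-1) \<in> H)"

definition right_right :: "nat \<Rightarrow> (nat \<times> nat) set \<Rightarrow> nat \<Rightarrow> nat \<Rightarrow> bool" where
  \<comment> \<open>right edge points right; the right edge of (r,m+1) is identified with the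
      right edge of (2m+2-r,m), with opposite direction (out of one vertex, into the other)\<close>
  "right_right m H r j = (if j \<le> m then (r,j) \<in> H else (2*m+2-r, m) \<notin> H)"

definition top_up :: "nat \<Rightarrow> (nat \<times> nat) set \<Rightarrow> (nat \<times> nat) set \<Rightarrow> nat \<Rightarrow> nat \<Rightarrow> bool" where
  \<comment> \<open>top edge points up; the top edge of (m+2,m+1) points down iff the right edge
      of (m+1,m) points right\<close>
  "top_up m H U r j = (if r = 1 then True
                       else if r = m+2 \<and> j = m+1 then (m+1, m) \<notin> H
                       else (r,j) \<in> U)"

definition bot_up :: "nat \<Rightarrow> (nat \<times> nat) set \<Rightarrow> nat \<Rightarrow> nat \<Rightarrow> bool" where
  "bot_up m U r j = (if r = 2*m+1 then False else (r+1, j) \<in> U)"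

text \<open>Two-in (ice) rule at a vertex, in terms of l = left edge points right,
  rt = right edge points right, t = top edge points up, b = bottom edge points up.\<close>
definition ice :: "bool \<Rightarrow> bool \<Rightarrow> bool \<Rightarrow> bool \<Rightarrow> bool" where
  "ice l rt t b = (of_bool l + of_bool (\<not> rt) + of_bool (\<not> t) + of_bool b = (2::nat))"

definition vweight :: "complex \<Rightarrow> complex \<Rightarrow> bool \<Rightarrow> bool \<Rightarrow> bool \<Rightarrow> bool \<Rightarrow> complex" where
  "vweight a z l rt t b =
     (if l \<and> \<not> rt \<and> t \<and> \<not> b then sig (a^2)            \<comment> \<open>type 1\<close>
      else if \<not> l \<and> rt \<and> \<not> t \<and> b then sig (a^2)       \<comment> \<open>type 2\<close>
      else if l \<and> rt \<and> t \<and> b then sig (a * z)           \<comment> \<open>type 3\<close>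
      else if \<not> l \<and> \<not> rt \<and> \<not> t \<and> \<not> b then sig (a * z) \<comment> \<open>type 4\<close>
      else if \<not> l \<and> \<not> rt \<and> t \<and> b then sig (a * inverse z) \<comment> \<open>type 5\<close>
      else if l \<and> rt \<and> \<not> t \<and> \<not> b then sig (a * inverse z) \<comment> \<open>type 6\<close>
      else 0)"

definition spec :: "nat \<Rightarrow> (nat \<Rightarrow> complex) \<Rightarrow> (nat \<Rightarrow> complex) \<Rightarrow> nat \<Rightarrow> nat \<Rightarrow> complex" where
  "spec m x y r j = x (min r (2*m+2-r)) * inverse (y j)"

definition ht_valid :: "nat \<Rightarrow> (nat \<times> nat) set \<times> (nat \<times> nat) set \<Rightarrow> bool" where
  "ht_valid m s = (\<forall>(r,j)\<in>ht_verts m.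
      ice (left_right (fst s) r j) (right_right m (fst s) r j)
          (top_up m (fst s) (snd s) r j) (bot_up m (snd s) r j))"

text \<open>Z_HT(2m+1; x, y), with x, y indexed by 1..m+1.\<close>
definition Z_HT :: "nat \<Rightarrow> complex \<Rightarrow> (nat \<Rightarrow> complex) \<Rightarrow> (nat \<Rightarrow> complex) \<Rightarrow> complex" where
  "Z_HT m a x y = (\<Sum>s\<in>{s\<in>ht_states m. ht_valid m s}.
      \<Prod>(r,j)\<in>ht_verts m.
        vweight a (spec m x y r j) (left_right (fst s) r j) (right_right m (fst s) r j)
          (top_up m (fst s) (snd s) r j) (bot_up m (snd s) r j))"

end

theory Submission
  imports Defs
begin

text \<open>Cutting the grid into its m full columns and the half column m+1 writes Z_HT as a product
  of column transfer matrices applied to the left boundary, where all arrows point right, and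
  closed off by the half column, whose right edges are the right edges of the upper half of
  column m, reversed and in reverse order (the U-turn). Symmetry in y: an R-matrix inserted
  above two neighbouring columns is pushed down through them (Yang--Baxter for two vertical
  lines), exchanging the columns. Symmetry in x: an R-matrix inserted at the left ends of the rows
  k+1, k+2 is pushed through all columns (Yang--Baxter for two horizontal lines) and across the
  U-turn, where by its half-turn invariance it becomes an R-matrix on the mirror rows of the lower
  half, which is pushed back to the left boundary. On the boundary the R-matrix acts by a scalar,
  which is nonzero for generic parameters; continuity removes the genericity. If y_1 = a x_1, the top vertex of column 1 has spectral parameter 1/a, so its
  type-3/4 weight \<sigma>(a z) vanishes; this freezes the first column and the outermost rows, leaving
  the product of their weights times the partition function of the remaining grid.\<close>

lemma sum_UNIV_bool: "(\<Sum>v\<in>(UNIV::bool set). f v) = f False + f True"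
  by (simp add: UNIV_bool add.commute)

definition bool_lists :: "nat \<Rightarrow> bool list set" where
  "bool_lists n = {xs. length xs = n}"

lemma finite_bool_lists[simp]: "finite (bool_lists n)"
proof -
  have "bool_lists n = {xs. set xs \<subseteq> UNIV \<and> length xs = n}" by (auto simp: bool_lists_def)
  then show ?thesis using finite_lists_length_eq[of "UNIV::bool set" n] by simp
qed

lemma bool_lists_0[simp]: "bool_lists 0 = {[]}" by (auto simp: bool_lists_def)

lemma sum_bool_lists_Suc:
  "(\<Sum>h\<in>bool_lists (Suc n). f h) = (\<Sum>b\<in>UNIV. \<Sum>h\<in>bool_lists n. f (b#h))"
proof -
  have e: "bool_lists (Suc n) = (\<lambda>(b,h). b#h) ` (UNIV \<times> bool_lists n)"
    by (auto simp: bool_lists_def length_Suc_conv image_iff)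
  have i: "inj_on (\<lambda>(b,h). b#h) (UNIV \<times> bool_lists n)" by (auto simp: inj_on_def)
  have "(\<Sum>h\<in>bool_lists (Suc n). f h) = (\<Sum>p\<in>UNIV \<times> bool_lists n. f (fst p # snd p))"
    unfolding e by (subst sum.reindex[OF i]) (auto intro!: sum.cong)
  also have "\<dots> = (\<Sum>b\<in>UNIV. \<Sum>h\<in>bool_lists n. f (b#h))"
    by (simp add: sum.cartesian_product split_def)
  finally show ?thesis .
qed

lemma sum_bool_lists_snoc:
  "(\<Sum>h\<in>bool_lists (Suc k). f h) = (\<Sum>d\<in>UNIV. \<Sum>h\<in>bool_lists k. f (h @ [d]))"
proof (induction k arbitrary: f)
  case 0
  then show ?case by (simp add: sum_bool_lists_Suc)
next
  case (Suc k)
  have "(\<Sum>h\<in>bool_lists (Suc (Suc k)). f h) = (\<Sum>b\<in>UNIV. \<Sum>h\<in>bool_lists (Suc k). f (b#h))"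
    by (rule sum_bool_lists_Suc)
  also have "\<dots> = (\<Sum>b\<in>UNIV. \<Sum>d\<in>UNIV. \<Sum>h\<in>bool_lists k. f (b#h@[d]))"
    using Suc.IH by simp
  also have "\<dots> = (\<Sum>d\<in>UNIV. \<Sum>b\<in>UNIV. \<Sum>h\<in>bool_lists k. f ((b#h)@[d]))"
    by (subst sum.swap) simp
  also have "\<dots> = (\<Sum>d\<in>UNIV. \<Sum>h\<in>bool_lists (Suc k). f (h@[d]))"
    by (simp add: sum_bool_lists_Suc)
  finally show ?case .
qed

lemma sum_Pow_Un:
  assumes "finite A" "finite B" "A \<inter> B = {}"
  shows "(\<Sum>U\<in>Pow (A \<union> B). f U) = (\<Sum>S\<in>Pow A. \<Sum>T\<in>Pow B. f (S \<union> T))"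
proof -
  have "(\<Sum>S\<in>Pow A. \<Sum>T\<in>Pow B. f (S \<union> T)) = (\<Sum>p\<in>Pow A \<times> Pow B. f (fst p \<union> snd p))"
    by (simp add: sum.cartesian_product split_def)
  also have "\<dots> = (\<Sum>U\<in>Pow (A \<union> B). f U)"
    by (rule sum.reindex_bij_witness[of _ "\<lambda>U. (U \<inter> A, U \<inter> B)" "\<lambda>p. fst p \<union> snd p"])
       (use assms in auto)
  finally show ?thesis by simp
qed

lemma sum_Pow_insert:
  assumes "finite A" "a \<notin> A"
  shows "(\<Sum>U\<in>Pow (insert a A). f U) = (\<Sum>v\<in>UNIV. \<Sum>V\<in>Pow A. f (if v then insert a V else V))"
proof -
  have "(\<Sum>U\<in>Pow (insert a A). f U) = (\<Sum>U\<in>Pow ({a} \<union> A). f U)" by simp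
  also have "\<dots> = (\<Sum>S\<in>Pow {a}. \<Sum>T\<in>Pow A. f (S \<union> T))"
    using assms by (intro sum_Pow_Un) auto
  also have "\<dots> = (\<Sum>T\<in>Pow A. f T) + (\<Sum>T\<in>Pow A. f (insert a T))"
  proof -
    have "Pow {a} = {{}, {a}}" by auto
    then show ?thesis by (simp add: sum.distrib)
  qed
  also have "\<dots> = (\<Sum>v\<in>UNIV. \<Sum>V\<in>Pow A. f (if v then insert a V else V))"
    by (simp add: sum_UNIV_bool)
  finally show ?thesis .
qed

lemma sum_Pow_UN_prod:
  fixes g :: "'i \<Rightarrow> 'a set \<Rightarrow> complex"
  assumes "finite I" "\<And>i. i \<in> I \<Longrightarrow> finite (D i)"
    and "\<And>i j. i \<in> I \<Longrightarrow> j \<in> I \<Longrightarrow> i \<noteq> j \<Longrightarrow> D i \<inter> D j = {}"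
    and "\<And>i U. i \<in> I \<Longrightarrow> g i U = g i (U \<inter> D i)"
  shows "(\<Sum>U\<in>Pow (\<Union>i\<in>I. D i). \<Prod>i\<in>I. g i U) = (\<Prod>i\<in>I. \<Sum>U\<in>Pow (D i). g i U)"
  using assms
proof (induction I rule: finite_induct)
  case empty
  then show ?case by simp
next
  case (insert i I)
  define R where "R = (\<Union>j\<in>I. D j)"
  have fR: "finite R" using insert.hyps insert.prems(1) by (auto simp: R_def)
  have dis: "D i \<inter> R = {}" using insert.hyps insert.prems(2) by (auto simp: R_def)
  have "(\<Sum>U\<in>Pow (\<Union>j\<in>insert i I. D j). \<Prod>j\<in>insert i I. g j U)
      = (\<Sum>S\<in>Pow (D i). \<Sum>T\<in>Pow R. \<Prod>j\<in>insert i I. g j (S \<union> T))"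
    using insert.prems(1) fR dis by (simp add: R_def sum_Pow_Un)
  also have "\<dots> = (\<Sum>S\<in>Pow (D i). \<Sum>T\<in>Pow R. g i S * (\<Prod>j\<in>I. g j T))"
  proof (intro sum.cong refl)
    fix S T assume S: "S \<in> Pow (D i)" and T: "T \<in> Pow R"
    have "(S \<union> T) \<inter> D i = S" using S T dis by auto
    then have "g i (S \<union> T) = g i S"
      using insert.prems(3)[of i "S \<union> T"] by simp
    moreover have "g j (S \<union> T) = g j T" if "j \<in> I" for j
    proof -
      have "(S \<union> T) \<inter> D j = T \<inter> D j"
        using S T insert.prems(2)[of i j] insert.hyps that by auto
      then show ?thesis using insert.prems(3)[of j "S \<union> T"] insert.prems(3)[of j T] that by simp
    qed
    ultimately show "(\<Prod>j\<in>insert i I. g j (S \<union> T)) = g i S * (\<Prod>j\<in>I. g j T)"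
      using insert.hyps by simp
  qed
  also have "\<dots> = (\<Sum>S\<in>Pow (D i). g i S) * (\<Sum>T\<in>Pow R. \<Prod>j\<in>I. g j T)"
    by (simp only: sum_product)
  also have "\<dots> = (\<Prod>j\<in>insert i I. \<Sum>U\<in>Pow (D j). g j U)"
  proof -
    have "(\<Sum>T\<in>Pow R. \<Prod>j\<in>I. g j T) = (\<Prod>j\<in>I. \<Sum>U\<in>Pow (D j). g j U)"
      unfolding R_def by (rule insert.IH) (use insert.prems in blast)+
    then show ?thesis using insert.hyps by simp
  qed
  finally show ?case .
qed

lemma sum_Pow_image:
  assumes "inj_on f A"
  shows "(\<Sum>U\<in>Pow (f ` A). G U) = (\<Sum>V\<in>Pow A. G (f ` V))"
proof -
  have "Pow (f ` A) = image f ` Pow A" by (rule image_Pow_surj[symmetric]) simp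
  then show ?thesis using sum.reindex[OF inj_on_image_Pow[OF assms], of G] by simp
qed

section \<open>The R-matrix and the Yang--Baxter equations\<close>

text \<open>The weight of the crossing of two lines with spectral parameters z1, z2, where q = z1/z2;
  l1, l2 are the arrows entering the crossing and u1, u2 the arrows leaving it on the same lines,
  True meaning the direction of travel.\<close>

definition rmat :: "complex \<Rightarrow> complex \<Rightarrow> bool \<Rightarrow> bool \<Rightarrow> bool \<Rightarrow> bool \<Rightarrow> complex" where
 "rmat a q l1 l2 u1 u2 = (if l1 = u1 \<and> l2 = u2 then (if l1 = l2 then sig (a^2 * inverse q) else sig (a^2))
    else if l1 = u2 \<and> l2 = u1 then sig q else 0)"

lemma yang_baxter_rows:
  assumes "a \<noteq> 0" "z1 \<noteq> 0" "z2 \<noteq> 0"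
  shows "(\<Sum>u1\<in>UNIV. \<Sum>u2\<in>UNIV. \<Sum>v1\<in>UNIV. rmat a (z1/z2) l1 l2 u1 u2 * vweight a z1 u1 r1 t v1 * vweight a z2 u2 r2 v1 v2)
       = (\<Sum>w1\<in>UNIV. \<Sum>w2\<in>UNIV. \<Sum>v1\<in>UNIV. vweight a z2 l1 w1 t v1 * vweight a z1 l2 w2 v1 v2 * rmat a (z1/z2) w1 w2 r1 r2)"
  using assms
  by (simp add: sum_UNIV_bool, cases l1; cases l2; cases r1; cases r2; cases t; cases v2;
      simp add: rmat_def vweight_def sig_def field_simps; algebra?)

lemma yang_baxter_columns:
  assumes "a \<noteq> 0" "z1 \<noteq> 0" "z2 \<noteq> 0"
  shows "(\<Sum>s1\<in>UNIV. \<Sum>s2\<in>UNIV. \<Sum>m\<in>UNIV. rmat a (z1/z2) t1 t2 s1 s2 * vweight a z1 l m s1 v1 * vweight a z2 m r s2 v2)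
       = (\<Sum>m\<in>UNIV. \<Sum>u1\<in>UNIV. \<Sum>u2\<in>UNIV. vweight a z2 l m t1 u1 * vweight a z1 m r t2 u2 * rmat a (z1/z2) u1 u2 v1 v2)"
  using assms
  by (simp add: sum_UNIV_bool, cases l; cases r; cases t1; cases t2; cases v1; cases v2;
      simp add: rmat_def vweight_def sig_def field_simps; algebra?)

lemma rmat_half_turn: "rmat a q l1 l2 u1 u2 = rmat a q (\<not>u2) (\<not>u1) (\<not>l2) (\<not>l1)"
  by (auto simp: rmat_def)

section \<open>Column transfer matrices\<close>

text \<open>column a zs t b L R is the weight of a column of vertices with spectral parameters zs
  (top to bottom), summed over its inner vertical edges; t and b say whether the top and bottom
  edges point up, L and R whether the horizontal edges on the left and on the right point right.
  columns a zss w h places the columns zss side by side with left boundary h, top edges up and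
  bottom edges down, and weights the right boundary with w.\<close>

fun column :: "complex \<Rightarrow> complex list \<Rightarrow> bool \<Rightarrow> bool \<Rightarrow> bool list \<Rightarrow> bool list \<Rightarrow> complex" where
  "column a [] t b [] [] = (if t = b then 1 else 0)"
| "column a (z#zs) t b (l#L) (r#R) = (\<Sum>v\<in>UNIV. vweight a z l r t v * column a zs v b L R)"
| "column a _ t b _ _ = 0"

fun columns :: "complex \<Rightarrow> complex list list \<Rightarrow> (bool list \<Rightarrow> complex) \<Rightarrow> bool list \<Rightarrow> complex" where
  "columns a [] w h = w h"
| "columns a (zs#zss) w h = (\<Sum>h'\<in>bool_lists (length h). column a zs True False h h' * columns a zss w h')"

text \<open>An R-matrix attached to the left ends of the rows k and k+1 (0-based) of a boundary state.\<close>

definition rmat_act :: "complex \<Rightarrow> nat \<Rightarrow> complex \<Rightarrow> (bool list \<Rightarrow> complex) \<Rightarrow> bool list \<Rightarrow> complex" where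
 "rmat_act a k q v h = (\<Sum>u1\<in>UNIV. \<Sum>u2\<in>UNIV. rmat a q (h!k) (h!Suc k) u1 u2 * v (h[k:=u1, Suc k:=u2]))"

definition swap_adj :: "nat \<Rightarrow> 'a list \<Rightarrow> 'a list" where
  "swap_adj k zs = zs[k := zs!Suc k, Suc k := zs!k]"

lemma swap_adj_Cons_Suc[simp]: "swap_adj (Suc k) (z#zs) = z # swap_adj k zs"
  by (simp add: swap_adj_def)

lemma swap_adj_0[simp]: "swap_adj 0 (z1#z2#zs) = z2#z1#zs"
  by (simp add: swap_adj_def)

lemma length_swap_adj[simp]: "length (swap_adj k zs) = length zs"
  by (simp add: swap_adj_def)

lemma nth_swap_adj: "Suc k < length zs \<Longrightarrow> swap_adj k zs ! i = (if i = k then zs!Suc k else if i = Suc k then zs!k else zs!i)"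
  by (simp add: swap_adj_def nth_list_update)

lemma column_rmat_exchange:
  assumes "a \<noteq> 0" "Suc k < length zs" "zs!k \<noteq> 0" "zs!Suc k \<noteq> 0"
    and "length L = length zs" "length Rr = length zs"
  shows "(\<Sum>u1\<in>UNIV. \<Sum>u2\<in>UNIV. rmat a (zs!k/zs!Suc k) (L!k) (L!Suc k) u1 u2 * column a zs t b (L[k:=u1, Suc k:=u2]) Rr)
       = (\<Sum>w1\<in>UNIV. \<Sum>w2\<in>UNIV. column a (swap_adj k zs) t b L (Rr[k:=w1, Suc k:=w2]) * rmat a (zs!k/zs!Suc k) w1 w2 (Rr!k) (Rr!Suc k))"
  using assms
proof (induction k arbitrary: zs L Rr t)
  case 0
  then obtain z1 z2 zs0 where zs: "zs = z1#z2#zs0"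
    by (metis Suc_length_conv less_Suc_eq_0_disj less_imp_Suc_add list.size(3) not_less_zero add_Suc_right)
  obtain l1 l2 L0 where L: "L = l1#l2#L0" using 0 zs
    by (metis Suc_length_conv length_Cons)
  obtain r1 r2 R0 where R: "Rr = r1#r2#R0" using 0 zs
    by (metis Suc_length_conv length_Cons)
  have y: "\<And>v2. (\<Sum>u1\<in>UNIV. \<Sum>u2\<in>UNIV. \<Sum>v1\<in>UNIV. rmat a (z1/z2) l1 l2 u1 u2 * vweight a z1 u1 r1 t v1 * vweight a z2 u2 r2 v1 v2)
       = (\<Sum>w1\<in>UNIV. \<Sum>w2\<in>UNIV. \<Sum>v1\<in>UNIV. vweight a z2 l1 w1 t v1 * vweight a z1 l2 w2 v1 v2 * rmat a (z1/z2) w1 w2 r1 r2)"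
    using yang_baxter_rows 0 zs by simp
  define C where "C v2 = column a zs0 v2 b L0 R0" for v2
  have "(\<Sum>u1\<in>UNIV. \<Sum>u2\<in>UNIV. rmat a (zs!0/zs!Suc 0) (L!0) (L!Suc 0) u1 u2 * column a zs t b (L[0:=u1, Suc 0:=u2]) Rr)
     = (\<Sum>v2\<in>UNIV. (\<Sum>u1\<in>UNIV. \<Sum>u2\<in>UNIV. \<Sum>v1\<in>UNIV. rmat a (z1/z2) l1 l2 u1 u2 * vweight a z1 u1 r1 t v1 * vweight a z2 u2 r2 v1 v2) * C v2)"
    unfolding zs L R C_def by (simp add: sum_UNIV_bool algebra_simps)
  also have "\<dots> = (\<Sum>v2\<in>UNIV. (\<Sum>w1\<in>UNIV. \<Sum>w2\<in>UNIV. \<Sum>v1\<in>UNIV. vweight a z2 l1 w1 t v1 * vweight a z1 l2 w2 v1 v2 * rmat a (z1/z2) w1 w2 r1 r2) * C v2)"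
    using y by simp
  also have "\<dots> = (\<Sum>w1\<in>UNIV. \<Sum>w2\<in>UNIV. column a (swap_adj 0 zs) t b L (Rr[0:=w1, Suc 0:=w2]) * rmat a (zs!0/zs!Suc 0) w1 w2 (Rr!0) (Rr!Suc 0))"
    unfolding zs L R C_def by (simp add: sum_UNIV_bool algebra_simps)
  finally show ?case .
next
  case (Suc k)
  then obtain z zs0 where zs: "zs = z#zs0" by (cases zs) auto
  obtain l L0 where L: "L = l#L0" using Suc zs by (cases L) auto
  obtain r R0 where R: "Rr = r#R0" using Suc zs by (cases Rr) auto
  have IH: "\<And>t. (\<Sum>u1\<in>UNIV. \<Sum>u2\<in>UNIV. rmat a (zs0!k/zs0!Suc k) (L0!k) (L0!Suc k) u1 u2 * column a zs0 t b (L0[k:=u1, Suc k:=u2]) R0)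
       = (\<Sum>w1\<in>UNIV. \<Sum>w2\<in>UNIV. column a (swap_adj k zs0) t b L0 (R0[k:=w1, Suc k:=w2]) * rmat a (zs0!k/zs0!Suc k) w1 w2 (R0!k) (R0!Suc k))"
    using Suc zs L R by (intro Suc.IH) auto
  have "(\<Sum>u1\<in>UNIV. \<Sum>u2\<in>UNIV. rmat a (zs!Suc k/zs!Suc (Suc k)) (L!Suc k) (L!Suc (Suc k)) u1 u2 * column a zs t b (L[Suc k:=u1, Suc (Suc k):=u2]) Rr)
     = (\<Sum>v\<in>UNIV. vweight a z l r t v * (\<Sum>u1\<in>UNIV. \<Sum>u2\<in>UNIV. rmat a (zs0!k/zs0!Suc k) (L0!k) (L0!Suc k) u1 u2 * column a zs0 v b (L0[k:=u1, Suc k:=u2]) R0))"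
    unfolding zs L R by (simp add: sum_UNIV_bool algebra_simps)
  also have "\<dots> = (\<Sum>v\<in>UNIV. vweight a z l r t v * (\<Sum>w1\<in>UNIV. \<Sum>w2\<in>UNIV. column a (swap_adj k zs0) v b L0 (R0[k:=w1, Suc k:=w2]) * rmat a (zs0!k/zs0!Suc k) w1 w2 (R0!k) (R0!Suc k)))"
    by (simp only: IH)
  also have "\<dots> = (\<Sum>w1\<in>UNIV. \<Sum>w2\<in>UNIV. column a (swap_adj (Suc k) zs) t b L (Rr[Suc k:=w1, Suc (Suc k):=w2]) * rmat a (zs!Suc k/zs!Suc (Suc k)) w1 w2 (Rr!Suc k) (Rr!Suc (Suc k)))"
    unfolding zs L R by (simp add: sum_UNIV_bool algebra_simps)
  finally show ?case .
qed

lemma list_update2_overwrite[simp]: "xs[k:=a, Suc k:=b, k:=c, Suc k:=d] = xs[k:=c, Suc k:=d]"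
  by (metis list_update_overwrite list_update_swap n_not_Suc_n)

lemma sum_bool_lists_update2:
  assumes "Suc k < n"
  shows "(\<Sum>h\<in>bool_lists n. \<Sum>w1\<in>UNIV. \<Sum>w2\<in>UNIV. G h w1 w2)
       = (\<Sum>h\<in>bool_lists n. \<Sum>w1\<in>UNIV. \<Sum>w2\<in>UNIV. G (h[k:=w1, Suc k:=w2]) (h!k) (h!Suc k))"
proof -
  define \<phi> where "\<phi> = (\<lambda>(h::bool list,w1::bool,w2::bool). (h[k:=w1, Suc k:=w2], h!k, h!Suc k))"
  have "(\<Sum>h\<in>bool_lists n. \<Sum>w1\<in>UNIV. \<Sum>w2\<in>UNIV. G h w1 w2) = (\<Sum>p\<in>bool_lists n \<times> UNIV \<times> UNIV. G (fst p) (fst (snd p)) (snd (snd p)))"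
    by (simp add: sum.cartesian_product split_def)
  also have "\<dots> = (\<Sum>p\<in>bool_lists n \<times> UNIV \<times> UNIV. G (fst (\<phi> p)) (fst (snd (\<phi> p))) (snd (snd (\<phi> p))))"
  proof (rule sum.reindex_bij_witness[of _ \<phi> \<phi>])
    fix p assume "p \<in> bool_lists n \<times> (UNIV::bool set) \<times> (UNIV::bool set)"
    then show "\<phi> (\<phi> p) = p" "\<phi> p \<in> bool_lists n \<times> UNIV \<times> UNIV"
      using assms by (auto simp: \<phi>_def bool_lists_def split: prod.splits)
  qed (use assms in \<open>auto simp: \<phi>_def bool_lists_def\<close>)
  also have "\<dots> = (\<Sum>h\<in>bool_lists n. \<Sum>w1\<in>UNIV. \<Sum>w2\<in>UNIV. G (h[k:=w1, Suc k:=w2]) (h!k) (h!Suc k))"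
    by (simp add: sum.cartesian_product split_def \<phi>_def)
  finally show ?thesis .
qed

lemma rmat_act_column:
  assumes "a \<noteq> 0" "Suc k < length zs" "zs!k \<noteq> 0" "zs!Suc k \<noteq> 0" "length h = length zs"
  shows "rmat_act a k (zs!k/zs!Suc k) (\<lambda>h. \<Sum>h'\<in>bool_lists (length h). column a zs True False h h' * v h') h
       = (\<Sum>h'\<in>bool_lists (length h). column a (swap_adj k zs) True False h h' * rmat_act a k (zs!k/zs!Suc k) v h')"
proof -
  let ?q = "zs!k/zs!Suc k"
  let ?N = "length h"
  have "rmat_act a k ?q (\<lambda>h. \<Sum>h'\<in>bool_lists (length h). column a zs True False h h' * v h') h
      = (\<Sum>u1\<in>UNIV. \<Sum>u2\<in>UNIV. rmat a ?q (h!k) (h!Suc k) u1 u2 * (\<Sum>h'\<in>bool_lists ?N. column a zs True False (h[k:=u1, Suc k:=u2]) h' * v h'))"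
    by (simp add: rmat_act_def)
  also have "\<dots> = (\<Sum>h'\<in>bool_lists ?N. (\<Sum>u1\<in>UNIV. \<Sum>u2\<in>UNIV. rmat a ?q (h!k) (h!Suc k) u1 u2 * column a zs True False (h[k:=u1, Suc k:=u2]) h') * v h')"
    by (simp add: sum_distrib_left sum_distrib_right mult.assoc sum.swap[of _ "bool_lists ?N"])
  also have "\<dots> = (\<Sum>h'\<in>bool_lists ?N. (\<Sum>w1\<in>UNIV. \<Sum>w2\<in>UNIV. column a (swap_adj k zs) True False h (h'[k:=w1, Suc k:=w2]) * rmat a ?q w1 w2 (h'!k) (h'!Suc k)) * v h')"
    using assms by (intro sum.cong refl, subst column_rmat_exchange) (auto simp: bool_lists_def)
  also have "\<dots> = (\<Sum>h'\<in>bool_lists ?N. \<Sum>w1\<in>UNIV. \<Sum>w2\<in>UNIV. column a (swap_adj k zs) True False h (h'[k:=w1, Suc k:=w2]) * rmat a ?q w1 w2 (h'!k) (h'!Suc k) * v ((h'[k:=w1, Suc k:=w2])[k:=h'!k, Suc k:=h'!Suc k]))"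
    by (simp add: sum_distrib_right)
  also have "\<dots> = (\<Sum>h'\<in>bool_lists ?N. \<Sum>w1\<in>UNIV. \<Sum>w2\<in>UNIV. column a (swap_adj k zs) True False h h' * rmat a ?q (h'!k) (h'!Suc k) w1 w2 * v (h'[k:=w1, Suc k:=w2]))"
  proof -
    have "(\<Sum>h'\<in>bool_lists ?N. \<Sum>w1\<in>UNIV. \<Sum>w2\<in>UNIV. column a (swap_adj k zs) True False h h' * rmat a ?q (h'!k) (h'!Suc k) w1 w2 * v (h'[k:=w1, Suc k:=w2]))
      = (\<Sum>h'\<in>bool_lists ?N. \<Sum>w1\<in>UNIV. \<Sum>w2\<in>UNIV. column a (swap_adj k zs) True False h (h'[k:=w1, Suc k:=w2]) * rmat a ?q ((h'[k:=w1, Suc k:=w2])!k) ((h'[k:=w1, Suc k:=w2])!Suc k) (h'!k) (h'!Suc k) * v ((h'[k:=w1, Suc k:=w2])[k:=h'!k, Suc k:=h'!Suc k]))"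
      using assms by (intro sum_bool_lists_update2) simp
    also have "\<dots> = (\<Sum>h'\<in>bool_lists ?N. \<Sum>w1\<in>UNIV. \<Sum>w2\<in>UNIV. column a (swap_adj k zs) True False h (h'[k:=w1, Suc k:=w2]) * rmat a ?q w1 w2 (h'!k) (h'!Suc k) * v ((h'[k:=w1, Suc k:=w2])[k:=h'!k, Suc k:=h'!Suc k]))"
      using assms by (intro sum.cong refl) (auto simp: bool_lists_def nth_list_update)
    finally show ?thesis by simp
  qed
  also have "\<dots> = (\<Sum>h'\<in>bool_lists ?N. column a (swap_adj k zs) True False h h' * rmat_act a k ?q v h')"
    by (simp add: rmat_act_def sum_distrib_left mult.assoc)
  finally show ?thesis .
qed

lemma rmat_act_columns:
  assumes "a \<noteq> 0" "Suc k < N" "length h = N"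
    and "\<forall>zs\<in>set zss. length zs = N \<and> zs!k \<noteq> 0 \<and> zs!Suc k \<noteq> 0 \<and> zs!k/zs!Suc k = q"
  shows "rmat_act a k q (columns a zss w) h = columns a (map (swap_adj k) zss) (rmat_act a k q w) h"
  using assms
proof (induction zss arbitrary: h)
  case Nil
  then show ?case by (simp add: rmat_act_def)
next
  case (Cons zs zss)
  have q: "q = zs!k/zs!Suc k" using Cons by simp
  have "rmat_act a k q (columns a (zs#zss) w) h = rmat_act a k q (\<lambda>h. \<Sum>h'\<in>bool_lists (length h). column a zs True False h h' * columns a zss w h') h"
    by (simp add: rmat_act_def)
  also have "\<dots> = (\<Sum>h'\<in>bool_lists (length h). column a (swap_adj k zs) True False h h' * rmat_act a k q (columns a zss w) h')"
    unfolding q using Cons.prems by (intro rmat_act_column) auto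
  also have "\<dots> = (\<Sum>h'\<in>bool_lists (length h). column a (swap_adj k zs) True False h h' * columns a (map (swap_adj k) zss) (rmat_act a k q w) h')"
    using Cons by (intro sum.cong refl) (auto simp: bool_lists_def)
  also have "\<dots> = columns a (map (swap_adj k) (zs#zss)) (rmat_act a k q w) h" by simp
  finally show ?case .
qed

lemma rmat_act_all_True:
  assumes "Suc k < N"
  shows "rmat_act a k q v (replicate N True) = sig (a^2 * inverse q) * v (replicate N True)"
proof -
  have "(replicate N True)[k := True, Suc k := True] = replicate N True"
    using assms by (metis Suc_lessD length_replicate list_update_id nth_replicate)
  then show ?thesis using assms by (simp add: rmat_act_def sum_UNIV_bool rmat_def)
qed

lemma columns_cong:
  assumes "\<And>h. length h = length h0 \<Longrightarrow> w h = w' h"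
  shows "columns a zss w h0 = columns a zss w' h0"
  using assms
proof (induction zss arbitrary: h0)
  case Nil then show ?case by simp
next
  case (Cons zs zss)
  show ?case using Cons.prems
    by (simp, intro sum.cong refl arg_cong2[where f="(*)"] Cons.IH) (auto simp: bool_lists_def)
qed

lemma columns_append: "columns a (zss1 @ zss2) w h = columns a zss1 (columns a zss2 w) h"
  by (induction zss1 arbitrary: h) auto

lemma column_snoc:
  assumes "length L = length zs" "length R = length zs"
  shows "column a (zs@[z]) t b (L@[l]) (R@[r]) = (\<Sum>v\<in>UNIV. column a zs t v L R * vweight a z l r v b)"
  using assms
proof (induction zs arbitrary: L R t)
  case Nil
  then show ?case by (simp add: sum_UNIV_bool)
next
  case (Cons z0 zs)
  obtain l0 L0 where L: "L = l0#L0" using Cons.prems by (cases L) auto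
  obtain r0 R0 where R: "R = r0#R0" using Cons.prems by (cases R) auto
  have IH: "\<And>t. column a (zs@[z]) t b (L0@[l]) (R0@[r]) = (\<Sum>v\<in>UNIV. column a zs t v L0 R0 * vweight a z l r v b)"
    using Cons L R by auto
  show ?case unfolding L R by (simp add: IH sum_UNIV_bool algebra_simps)
qed

lemma column_bottom_False:
  assumes "length L = length zs" "length R = length zs"
  shows "column a (zs@[z]) t False (L@[False]) (R@[r]) = (if r then 0 else sig (a * z) * column a zs t False L R)"
  using assms by (simp add: column_snoc sum_UNIV_bool vweight_def)

lemma column_bottom_True:
  assumes "length L = length zs" "length R = length zs"
  shows "column a (zs@[z]) t False (L@[True]) (R@[r]) = (if r then sig (a * inverse z) * column a zs t False L R else sig (a^2) * column a zs t True L R)"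
  using assms by (simp add: column_snoc sum_UNIV_bool vweight_def mult.commute)

lemma column_all_down:
  "length R = length zs \<Longrightarrow> column a zs False False (replicate (length zs) True) R
     = (if R = replicate (length zs) True then (\<Prod>z\<leftarrow>zs. sig (a * inverse z)) else 0)"
proof (induction zs arbitrary: R)
  case Nil then show ?case by simp
next
  case (Cons z zs)
  then obtain r R0 where R: "R = r#R0" by (cases R) auto
  show ?case using Cons R by (simp add: sum_UNIV_bool vweight_def)
qed

lemma column_first_row_frozen:
  assumes "a \<noteq> 0" "length R = length zs"
  shows "column a (inverse a # zs) True False (True # replicate (length zs) True) (r#R)
     = (if r = False \<and> R = replicate (length zs) True then sig (a^2) * (\<Prod>z\<leftarrow>zs. sig (a * inverse z)) else 0)"
proof -
  have s1: "sig (a * inverse a) = 0" using assms by (simp add: sig_def)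
  show ?thesis using assms column_all_down[OF assms(2), of a] s1 by (simp add: sum_UNIV_bool vweight_def)
qed

definition column_pair :: "complex \<Rightarrow> complex list \<Rightarrow> complex list \<Rightarrow> bool \<Rightarrow> bool \<Rightarrow> bool \<Rightarrow> bool \<Rightarrow> bool list \<Rightarrow> bool list \<Rightarrow> complex" where
  "column_pair a zsA zsB t1 t2 b1 b2 L R = (\<Sum>M\<in>bool_lists (length L). column a zsA t1 b1 L M * column a zsB t2 b2 M R)"

lemma column_pair_Nil: "column_pair a [] [] t1 t2 b1 b2 [] [] = (if t1 = b1 then 1 else 0) * (if t2 = b2 then 1 else 0)"
  by (simp add: column_pair_def)

lemma column_pair_Cons: "column_pair a (z1#zsA) (z2#zsB) t1 t2 b1 b2 (l#L) (r#R) =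
  (\<Sum>mid\<in>UNIV. \<Sum>v1\<in>UNIV. \<Sum>v2\<in>UNIV. vweight a z1 l mid t1 v1 * vweight a z2 mid r t2 v2 * column_pair a zsA zsB v1 v2 b1 b2 L R)"
  unfolding column_pair_def
  by (simp add: sum_bool_lists_Suc sum_UNIV_bool sum.distrib sum_distrib_left algebra_simps)

lemma column_pair_rmat_exchange:
  assumes "a \<noteq> 0" "length zsB = length zsA" "length L = length zsA" "length R = length zsA"
    and "\<forall>i<length zsA. zsA!i \<noteq> 0 \<and> zsB!i \<noteq> 0 \<and> zsA!i/zsB!i = q"
  shows "(\<Sum>s1\<in>UNIV. \<Sum>s2\<in>UNIV. rmat a q t1 t2 s1 s2 * column_pair a zsA zsB s1 s2 b1 b2 L R)
       = (\<Sum>s1\<in>UNIV. \<Sum>s2\<in>UNIV. column_pair a zsB zsA t1 t2 s1 s2 L R * rmat a q s1 s2 b1 b2)"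
  using assms
proof (induction zsA arbitrary: zsB L R t1 t2)
  case Nil
  then show ?case by (simp add: column_pair_Nil sum_UNIV_bool)
next
  case (Cons z1 A)
  obtain z2 B where zB: "zsB = z2#B" using Cons.prems by (cases zsB) auto
  obtain l L0 where L: "L = l#L0" using Cons.prems by (cases L) auto
  obtain r R0 where R: "R = r#R0" using Cons.prems by (cases R) auto
  have q: "q = z1/z2" "z1 \<noteq> 0" "z2 \<noteq> 0" using Cons.prems(5) zB by (auto dest: spec[of _ 0])
  have IH: "\<And>t1 t2. (\<Sum>s1\<in>UNIV. \<Sum>s2\<in>UNIV. rmat a q t1 t2 s1 s2 * column_pair a A B s1 s2 b1 b2 L0 R0)
       = (\<Sum>s1\<in>UNIV. \<Sum>s2\<in>UNIV. column_pair a B A t1 t2 s1 s2 L0 R0 * rmat a q s1 s2 b1 b2)"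
    using Cons.prems zB L R by (intro Cons.IH) auto
  have y: "\<And>v1 v2. (\<Sum>s1\<in>UNIV. \<Sum>s2\<in>UNIV. \<Sum>m\<in>UNIV. rmat a q t1 t2 s1 s2 * vweight a z1 l m s1 v1 * vweight a z2 m r s2 v2)
       = (\<Sum>m\<in>UNIV. \<Sum>u1\<in>UNIV. \<Sum>u2\<in>UNIV. vweight a z2 l m t1 u1 * vweight a z1 m r t2 u2 * rmat a q u1 u2 v1 v2)"
    unfolding q(1) using yang_baxter_columns Cons.prems(1) q(2,3) by blast
  define D where "D v1 v2 = column_pair a A B v1 v2 b1 b2 L0 R0" for v1 v2
  define E where "E u1 u2 = (\<Sum>s1\<in>UNIV. \<Sum>s2\<in>UNIV. column_pair a B A u1 u2 s1 s2 L0 R0 * rmat a q s1 s2 b1 b2)" for u1 u2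
  have "(\<Sum>s1\<in>UNIV. \<Sum>s2\<in>UNIV. rmat a q t1 t2 s1 s2 * column_pair a (z1#A) zsB s1 s2 b1 b2 L R)
      = (\<Sum>v1\<in>UNIV. \<Sum>v2\<in>UNIV. (\<Sum>s1\<in>UNIV. \<Sum>s2\<in>UNIV. \<Sum>m\<in>UNIV. rmat a q t1 t2 s1 s2 * vweight a z1 l m s1 v1 * vweight a z2 m r s2 v2) * D v1 v2)"
    unfolding zB L R column_pair_Cons D_def by (simp add: sum_UNIV_bool algebra_simps)
  also have "\<dots> = (\<Sum>v1\<in>UNIV. \<Sum>v2\<in>UNIV. (\<Sum>m\<in>UNIV. \<Sum>u1\<in>UNIV. \<Sum>u2\<in>UNIV. vweight a z2 l m t1 u1 * vweight a z1 m r t2 u2 * rmat a q u1 u2 v1 v2) * D v1 v2)"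
    by (simp only: y)
  also have "\<dots> = (\<Sum>m\<in>UNIV. \<Sum>u1\<in>UNIV. \<Sum>u2\<in>UNIV. vweight a z2 l m t1 u1 * vweight a z1 m r t2 u2 * (\<Sum>v1\<in>UNIV. \<Sum>v2\<in>UNIV. rmat a q u1 u2 v1 v2 * D v1 v2))"
    by (simp add: sum_UNIV_bool algebra_simps)
  also have "\<dots> = (\<Sum>m\<in>UNIV. \<Sum>u1\<in>UNIV. \<Sum>u2\<in>UNIV. vweight a z2 l m t1 u1 * vweight a z1 m r t2 u2 * E u1 u2)"
    unfolding D_def E_def by (simp only: IH)
  also have "\<dots> = (\<Sum>s1\<in>UNIV. \<Sum>s2\<in>UNIV. column_pair a zsB (z1#A) t1 t2 s1 s2 L R * rmat a q s1 s2 b1 b2)"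
    unfolding zB L R column_pair_Cons E_def by (simp add: sum_UNIV_bool algebra_simps)
  finally show ?case .
qed

lemma column_pair_swap:
  assumes "a \<noteq> 0" "length zsB = length zsA" "length L = length zsA" "length R = length zsA"
    and "\<forall>i<length zsA. zsA!i \<noteq> 0 \<and> zsB!i \<noteq> 0 \<and> zsA!i/zsB!i = q"
    and "sig (a^2 * inverse q) \<noteq> 0"
  shows "column_pair a zsA zsB True True False False L R = column_pair a zsB zsA True True False False L R"
proof -
  have "(\<Sum>s1\<in>UNIV. \<Sum>s2\<in>UNIV. rmat a q True True s1 s2 * column_pair a zsA zsB s1 s2 False False L R)
       = (\<Sum>s1\<in>UNIV. \<Sum>s2\<in>UNIV. column_pair a zsB zsA True True s1 s2 L R * rmat a q s1 s2 False False)"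
    using assms by (intro column_pair_rmat_exchange) auto
  then show ?thesis using assms(6) by (simp add: sum_UNIV_bool rmat_def)
qed

lemma columns_Cons_Cons:
  assumes "length h = N"
  shows "columns a (A#B#rest) w h = (\<Sum>h''\<in>bool_lists N. column_pair a A B True True False False h h'' * columns a rest w h'')"
proof -
  have "columns a (A#B#rest) w h = (\<Sum>h'\<in>bool_lists N. column a A True False h h' * (\<Sum>h''\<in>bool_lists N. column a B True False h' h'' * columns a rest w h''))"
    using assms by (auto simp: bool_lists_def intro!: sum.cong)
  also have "\<dots> = (\<Sum>h'\<in>bool_lists N. \<Sum>h''\<in>bool_lists N. column a A True False h h' * column a B True False h' h'' * columns a rest w h'')"
    by (simp add: sum_distrib_left mult.assoc)
  also have "\<dots> = (\<Sum>h''\<in>bool_lists N. \<Sum>h'\<in>bool_lists N. column a A True False h h' * column a B True False h' h'' * columns a rest w h'')"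
    by (rule sum.swap)
  also have "\<dots> = (\<Sum>h''\<in>bool_lists N. column_pair a A B True True False False h h'' * columns a rest w h'')"
    using assms by (simp add: column_pair_def sum_distrib_right)
  finally show ?thesis .
qed

section \<open>The transfer-matrix form of the partition function\<close>

declare upt_Suc[simp del]

text \<open>In the lists below the rows of a column are indexed from 0, so entry r belongs to grid row
  r+1. The half column m+1 covers the rows m+2, ..., 2m+1; its top edge is the right edge of
  vertex (m+1, m), i.e. entry m of the state h of the right edges of column m, and its right
  edges are the right edges of the rows m, ..., 1 of column m, read in this order and reversed
  in direction (uturn_right).\<close>

definition col_params :: "nat \<Rightarrow> (nat \<Rightarrow> complex) \<Rightarrow> (nat \<Rightarrow> complex) \<Rightarrow> nat \<Rightarrow> complex list" where
  "col_params m x y j = map (\<lambda>r. spec m x y r j) [1..<2*m+2]"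

definition uturn_params :: "nat \<Rightarrow> (nat \<Rightarrow> complex) \<Rightarrow> (nat \<Rightarrow> complex) \<Rightarrow> complex list" where
  "uturn_params m x y = map (\<lambda>r. spec m x y r (Suc m)) [m+2..<2*m+2]"

definition uturn_right :: "nat \<Rightarrow> bool list \<Rightarrow> bool list" where
  "uturn_right m h = map Not (rev (take m h))"

definition uturn_weight :: "complex \<Rightarrow> nat \<Rightarrow> (nat \<Rightarrow> complex) \<Rightarrow> (nat \<Rightarrow> complex) \<Rightarrow> bool list \<Rightarrow> complex" where
  "uturn_weight a m x y h = column a (uturn_params m x y) (\<not> h!m) False (drop (Suc m) h) (uturn_right m h)"

definition Z_transfer :: "nat \<Rightarrow> complex \<Rightarrow> (nat \<Rightarrow> complex) \<Rightarrow> (nat \<Rightarrow> complex) \<Rightarrow> complex" where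
  "Z_transfer m a x y = columns a (map (col_params m x y) [1..<Suc m]) (uturn_weight a m x y) (replicate (2*m+1) True)"

lemma length_col_params[simp]: "length (col_params m x y j) = 2*m+1" by (simp add: col_params_def)
lemma length_uturn_params[simp]: "length (uturn_params m x y) = m" by (simp add: uturn_params_def)
lemma length_uturn_right[simp]: "length h \<ge> m \<Longrightarrow> length (uturn_right m h) = m" by (simp add: uturn_right_def)

lemma nth_col_params: "i < 2*m+1 \<Longrightarrow> col_params m x y j ! i = x (min (Suc i) (2*m+1-i)) * inverse (y j)"
  by (simp add: col_params_def spec_def)

lemma nth_uturn_params: "i < m \<Longrightarrow> uturn_params m x y ! i = x (m - i) * inverse (y (Suc m))"
proof -
  assume "i < m"
  then have "min (m+2+i) (2*m+2-(m+2+i)) = m - i" by simp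
  then show ?thesis using \<open>i < m\<close> by (simp add: uturn_params_def spec_def)
qed

lemma nth_uturn_right: "i < m \<Longrightarrow> m \<le> length h \<Longrightarrow> uturn_right m h ! i = (\<not> h!(m - Suc i))"
  by (simp add: uturn_right_def rev_nth)

definition column_state_weight ::
    "complex \<Rightarrow> (nat \<Rightarrow> complex) \<Rightarrow> (nat \<Rightarrow> bool) \<Rightarrow> (nat \<Rightarrow> bool) \<Rightarrow> nat \<Rightarrow> nat \<Rightarrow> bool \<Rightarrow> bool \<Rightarrow> nat set \<Rightarrow> complex" where
  "column_state_weight a zf Lf Rf lo n t b V = (\<Prod>r\<in>{lo..<lo+n}. vweight a (zf r) (Lf r) (Rf r)
     (if r = lo then t else r \<in> V) (if r = lo+n-1 then b else Suc r \<in> V))"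

lemma column_state_weight_Suc:
  assumes "1 \<le> n" "V \<subseteq> {Suc (Suc lo)..<Suc lo + n}"
  shows "column_state_weight a zf Lf Rf lo (Suc n) t b (if v then insert (Suc lo) V else V)
       = vweight a (zf lo) (Lf lo) (Rf lo) t v * column_state_weight a zf Lf Rf (Suc lo) n v b V"
proof -
  let ?V = "if v then insert (Suc lo) V else V"
  have "column_state_weight a zf Lf Rf lo (Suc n) t b ?V
      = vweight a (zf lo) (Lf lo) (Rf lo) t v * (\<Prod>r\<in>{Suc lo..<Suc lo + n}. vweight a (zf r) (Lf r) (Rf r)
          (if r = lo then t else r \<in> ?V) (if r = lo + Suc n - 1 then b else Suc r \<in> ?V))"
  proof -
    have "{lo..<lo + Suc n} = insert lo {Suc lo..<Suc lo + n}" by auto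
    moreover have "(Suc lo \<in> ?V) = v" using assms(2) by auto
    ultimately show ?thesis using assms(1) by (simp add: column_state_weight_def)
  qed
  also have "(\<Prod>r\<in>{Suc lo..<Suc lo + n}. vweight a (zf r) (Lf r) (Rf r)
      (if r = lo then t else r \<in> ?V) (if r = lo + Suc n - 1 then b else Suc r \<in> ?V))
      = column_state_weight a zf Lf Rf (Suc lo) n v b V"
  proof -
    have "Suc lo \<notin> V" using assms(2) by auto
    then show ?thesis unfolding column_state_weight_def by (intro prod.cong refl) auto
  qed
  finally show ?thesis .
qed

lemma sum_Pow_column_state_weight:
  assumes "1 \<le> n"
  shows "(\<Sum>V\<in>Pow {Suc lo..<lo+n}. column_state_weight a zf Lf Rf lo n t b V)
       = column a (map zf [lo..<lo+n]) t b (map Lf [lo..<lo+n]) (map Rf [lo..<lo+n])"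
  using assms
proof (induction n arbitrary: lo t rule: nat_induct_at_least)
  case base
  then show ?case by (simp add: column_state_weight_def sum_UNIV_bool upt_conv_Cons)
next
  case (Suc n)
  have "{Suc lo..<lo + Suc n} = insert (Suc lo) {Suc (Suc lo)..<Suc lo + n}"
    using Suc.hyps by auto
  then have "(\<Sum>V\<in>Pow {Suc lo..<lo + Suc n}. column_state_weight a zf Lf Rf lo (Suc n) t b V)
      = (\<Sum>v\<in>UNIV. \<Sum>V\<in>Pow {Suc (Suc lo)..<Suc lo + n}.
           column_state_weight a zf Lf Rf lo (Suc n) t b (if v then insert (Suc lo) V else V))"
    by (simp add: sum_Pow_insert)
  also have "\<dots> = (\<Sum>v\<in>UNIV. vweight a (zf lo) (Lf lo) (Rf lo) t v *
      (\<Sum>V\<in>Pow {Suc (Suc lo)..<Suc lo + n}. column_state_weight a zf Lf Rf (Suc lo) n v b V))"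
  proof (intro sum.cong refl)
    fix v :: bool
    show "(\<Sum>V\<in>Pow {Suc (Suc lo)..<Suc lo + n}. column_state_weight a zf Lf Rf lo (Suc n) t b (if v then insert (Suc lo) V else V))
        = vweight a (zf lo) (Lf lo) (Rf lo) t v * (\<Sum>V\<in>Pow {Suc (Suc lo)..<Suc lo + n}. column_state_weight a zf Lf Rf (Suc lo) n v b V)"
      unfolding sum_distrib_left using Suc.hyps by (intro sum.cong refl column_state_weight_Suc) auto
  qed
  also have "\<dots> = column a (map zf [lo..<lo + Suc n]) t b (map Lf [lo..<lo + Suc n]) (map Rf [lo..<lo + Suc n])"
    using Suc.IH[of "Suc lo"] by (simp add: upt_conv_Cons)
  finally show ?case .
qed

lemma vweight_not_ice: "\<not> ice l rt t b \<Longrightarrow> vweight a z l rt t b = 0"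
  by (auto simp: ice_def vweight_def)

definition vertex_weight :: "nat \<Rightarrow> complex \<Rightarrow> (nat \<Rightarrow> complex) \<Rightarrow> (nat \<Rightarrow> complex) \<Rightarrow> (nat \<times> nat) set \<Rightarrow> (nat \<times> nat) set \<Rightarrow> nat \<times> nat \<Rightarrow> complex" where
  "vertex_weight m a x y H U v = vweight a (spec m x y (fst v) (snd v)) (left_right H (fst v) (snd v)) (right_right m H (fst v) (snd v))
          (top_up m H U (fst v) (snd v)) (bot_up m U (fst v) (snd v))"

lemma sum_Pow_inner_column:
  assumes "1 \<le> j" "j \<le> m"
  shows "(\<Sum>U\<in>Pow ((\<lambda>r. (r,j)) ` {2..<2*m+2}). \<Prod>v\<in>(\<lambda>r. (r,j)) ` {1..<2*m+2}. vertex_weight m a x y H U v)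
       = column a (col_params m x y j) True False (map (\<lambda>r. left_right H r j) [1..<2*m+2]) (map (\<lambda>r. (r,j)\<in>H) [1..<2*m+2])"
proof -
  define f where "f = (\<lambda>r::nat. (r,j))"
  have inj: "inj_on f A" for A by (auto simp: f_def inj_on_def)
  have "(\<Sum>U\<in>Pow (f ` {2..<2*m+2}). \<Prod>v\<in>f ` {1..<2*m+2}. vertex_weight m a x y H U v)
      = (\<Sum>V\<in>Pow {2..<2*m+2}. \<Prod>r\<in>{1..<2*m+2}. vertex_weight m a x y H (f ` V) (f r))"
    by (simp add: sum_Pow_image[OF inj] prod.reindex[OF inj])
  also have "\<dots> = (\<Sum>V\<in>Pow {Suc 1..<1+(2*m+1)}. \<Prod>r\<in>{1..<1+(2*m+1)}. vweight a (spec m x y r j) (left_right H r j) ((r,j)\<in>H)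
            (if r = 1 then True else r \<in> V) (if r = 1+(2*m+1)-1 then False else Suc r \<in> V))"
  proof (intro sum.cong prod.cong)
    fix V r assume V: "V \<in> Pow {Suc 1..<1+(2*m+1)}" and r: "r \<in> {1..<1+(2*m+1)}"
    have "(r, j) \<in> f ` V \<longleftrightarrow> r \<in> V" for r by (auto simp: f_def)
    then show "vertex_weight m a x y H (f ` V) (f r) = vweight a (spec m x y r j) (left_right H r j) ((r,j)\<in>H)
            (if r = 1 then True else r \<in> V) (if r = 1+(2*m+1)-1 then False else Suc r \<in> V)"
      using assms r by (simp add: vertex_weight_def f_def top_up_def bot_up_def right_right_def)
  qed auto
  also have "\<dots> = column a (map (\<lambda>r. spec m x y r j) [1..<1+(2*m+1)]) True False (map (\<lambda>r. left_right H r j) [1..<1+(2*m+1)]) (map (\<lambda>r. (r,j)\<in>H) [1..<1+(2*m+1)])"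
    by (rule sum_Pow_column_state_weight[unfolded column_state_weight_def]) simp
  finally show ?thesis by (simp add: f_def col_params_def)
qed

lemma sum_Pow_uturn_column:
  assumes "1 \<le> m"
  shows "(\<Sum>U\<in>Pow ((\<lambda>r. (r,Suc m)) ` {m+3..<2*m+2}). \<Prod>v\<in>(\<lambda>r. (r,Suc m)) ` {m+2..<2*m+2}. vertex_weight m a x y H U v)
       = column a (uturn_params m x y) ((Suc m, m) \<notin> H) False (map (\<lambda>r. (r,m)\<in>H) [m+2..<2*m+2]) (map (\<lambda>r. (2*m+2-r,m)\<notin>H) [m+2..<2*m+2])"
proof -
  define f where "f = (\<lambda>r::nat. (r,Suc m))"
  have inj: "inj_on f A" for A by (auto simp: f_def inj_on_def)
  have "(\<Sum>U\<in>Pow (f ` {m+3..<2*m+2}). \<Prod>v\<in>f ` {m+2..<2*m+2}. vertex_weight m a x y H U v)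
      = (\<Sum>V\<in>Pow {m+3..<2*m+2}. \<Prod>r\<in>{m+2..<2*m+2}. vertex_weight m a x y H (f ` V) (f r))"
    by (simp add: sum_Pow_image[OF inj] prod.reindex[OF inj])
  also have "\<dots> = (\<Sum>V\<in>Pow {Suc (m+2)..<(m+2)+m}. \<Prod>r\<in>{m+2..<(m+2)+m}. vweight a (spec m x y r (Suc m)) ((r,m)\<in>H) ((2*m+2-r,m)\<notin>H)
            (if r = m+2 then (Suc m, m) \<notin> H else r \<in> V) (if r = (m+2)+m-1 then False else Suc r \<in> V))"
  proof (intro sum.cong prod.cong)
    fix V r assume V: "V \<in> Pow {Suc (m+2)..<(m+2)+m}" and r: "r \<in> {m+2..<(m+2)+m}"
    have "(r, Suc m) \<in> f ` V \<longleftrightarrow> r \<in> V" for r by (auto simp: f_def)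
    then show "vertex_weight m a x y H (f ` V) (f r) = vweight a (spec m x y r (Suc m)) ((r,m)\<in>H) ((2*m+2-r,m)\<notin>H)
            (if r = m+2 then (Suc m, m) \<notin> H else r \<in> V) (if r = (m+2)+m-1 then False else Suc r \<in> V)"
      using assms r by (cases "r = m+2") (auto simp: vertex_weight_def f_def top_up_def bot_up_def right_right_def left_right_def)
  qed (auto simp: numeral_3_eq_3)
  also have "\<dots> = column a (map (\<lambda>r. spec m x y r (Suc m)) [m+2..<(m+2)+m]) ((Suc m, m) \<notin> H) False (map (\<lambda>r. (r,m)\<in>H) [m+2..<(m+2)+m]) (map (\<lambda>r. (2*m+2-r,m)\<notin>H) [m+2..<(m+2)+m])"
    by (rule sum_Pow_column_state_weight[unfolded column_state_weight_def]) (use assms in simp)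
  moreover have "(m+2)+m = 2*m+2" by simp
  ultimately show ?thesis by (simp only: f_def uturn_params_def)
qed

definition H_column :: "nat \<Rightarrow> (nat \<times> nat) set \<Rightarrow> nat \<Rightarrow> bool list" where
  "H_column m H j = map (\<lambda>r. (r,j)\<in>H) [1..<2*m+2]"

lemma nth_H_column: "k < 2*m+1 \<Longrightarrow> H_column m H j ! k = ((Suc k, j) \<in> H)"
  by (simp add: H_column_def)

lemma length_H_column[simp]: "length (H_column m H j) = 2*m+1" by (simp add: H_column_def)

lemma uturn_weight_H_column:
  assumes "1 \<le> m"
  shows "uturn_weight a m x y (H_column m H m) = column a (uturn_params m x y) ((Suc m, m) \<notin> H) False (map (\<lambda>r. (r,m)\<in>H) [m+2..<2*m+2]) (map (\<lambda>r. (2*m+2-r,m)\<notin>H) [m+2..<2*m+2])"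
proof -
  have top: "(\<not> H_column m H m ! m) = ((Suc m, m) \<notin> H)" by (simp add: H_column_def)
  have lower: "drop (Suc m) (H_column m H m) = map (\<lambda>r. (r,m)\<in>H) [m+2..<2*m+2]"
    by (simp add: H_column_def drop_map)
  have right: "uturn_right m (H_column m H m) = map (\<lambda>r. (2*m+2-r,m)\<notin>H) [m+2..<2*m+2]"
  proof (rule nth_equalityI)
    show "length (uturn_right m (H_column m H m)) = length (map (\<lambda>r. (2*m+2-r,m)\<notin>H) [m+2..<2*m+2])"
      by (simp add: H_column_def)
    fix i assume "i < length (uturn_right m (H_column m H m))"
    then have i: "i < m" by (simp add: H_column_def)
    have "2*m+2 - (m+2+i) = Suc (m - Suc i)" using i by simp
    then show "uturn_right m (H_column m H m) ! i = map (\<lambda>r. (2*m+2-r,m)\<notin>H) [m+2..<2*m+2] ! i"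
      using i by (simp add: nth_uturn_right nth_H_column)
  qed
  show ?thesis unfolding uturn_weight_def top lower right ..
qed

lemma sum_Pow_H_column:
  "(\<Sum>S\<in>Pow ((\<lambda>r. (r,j)) ` {1..<2*m+2}). \<phi> (H_column m S j)) = (\<Sum>h\<in>bool_lists (2*m+1). \<phi> h)"
proof (rule sum.reindex_bij_witness[of _ "\<lambda>h. {(r,j) | r. 1 \<le> r \<and> r < 2*m+2 \<and> h!(r-1)}" "\<lambda>S. H_column m S j"])
  fix S assume S: "S \<in> Pow ((\<lambda>r. (r,j)) ` {1..<2*m+2})"
  show "{(r,j) | r. 1 \<le> r \<and> r < 2*m+2 \<and> H_column m S j!(r-1)} = S"
  proof
    show "{(r,j) | r. 1 \<le> r \<and> r < 2*m+2 \<and> H_column m S j!(r-1)} \<subseteq> S"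
      by (auto simp: nth_H_column)
    show "S \<subseteq> {(r,j) | r. 1 \<le> r \<and> r < 2*m+2 \<and> H_column m S j!(r-1)}"
    proof
      fix p assume p: "p \<in> S"
      then obtain r where r: "p = (r,j)" "1 \<le> r" "r < 2*m+2" using S by auto
      then have "H_column m S j!(r-1)" using p by (simp add: nth_H_column)
      then show "p \<in> {(r,j) | r. 1 \<le> r \<and> r < 2*m+2 \<and> H_column m S j!(r-1)}" using r by auto
    qed
  qed
  show "H_column m S j \<in> bool_lists (2*m+1)" by (simp add: bool_lists_def)
  show "\<phi> (H_column m S j) = \<phi> (H_column m S j)" ..
next
  fix h assume h: "h \<in> bool_lists (2*m+1)"
  show "H_column m {(r,j) | r. 1 \<le> r \<and> r < 2*m+2 \<and> h!(r-1)} j = h"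
    using h by (intro nth_equalityI) (auto simp: bool_lists_def nth_H_column)
  show "{(r,j) | r. 1 \<le> r \<and> r < 2*m+2 \<and> h!(r-1)} \<in> Pow ((\<lambda>r. (r,j)) ` {1..<2*m+2})"
    by auto
qed

definition H_right_of :: "nat \<Rightarrow> nat \<Rightarrow> (nat \<times> nat) set" where
  "H_right_of m k = {(r,j). 1 \<le> r \<and> r \<le> 2*m+1 \<and> k < j \<and> j \<le> m}"

definition left_of_column :: "nat \<Rightarrow> bool list \<Rightarrow> nat \<Rightarrow> (nat \<times> nat) set \<Rightarrow> nat \<Rightarrow> bool list" where
  "left_of_column m h0 k H j = (if j = Suc k then h0 else H_column m H (j-1))"

lemma finite_H_right_of[simp]: "finite (H_right_of m k)"
proof -
  have "H_right_of m k \<subseteq> {1..2*m+1} \<times> {0..m}" by (auto simp: H_right_of_def)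
  then show ?thesis by (rule finite_subset) simp
qed

lemma H_column_eqI: "(\<And>r. 1 \<le> r \<Longrightarrow> r \<le> 2*m+1 \<Longrightarrow> ((r,j) \<in> A) = ((r,j) \<in> B)) \<Longrightarrow> H_column m A j = H_column m B j"
  by (auto simp: H_column_def)

definition partial_weight ::
    "complex \<Rightarrow> nat \<Rightarrow> (nat \<Rightarrow> complex) \<Rightarrow> (nat \<Rightarrow> complex) \<Rightarrow> nat \<Rightarrow> bool list \<Rightarrow> (nat \<times> nat) set \<Rightarrow> complex" where
  "partial_weight a m x y k h0 H =
     (\<Prod>j\<in>{Suc k..m}. column a (col_params m x y j) True False (left_of_column m h0 k H j) (H_column m H j))
     * uturn_weight a m x y (if k = m then h0 else H_column m H m)"

lemma partial_weight_Un:
  assumes "k < m" "S \<subseteq> (\<lambda>r. (r, Suc k)) ` {1..<2*m+2}" "T \<subseteq> H_right_of m (Suc k)"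
  shows "partial_weight a m x y k h0 (S \<union> T)
       = column a (col_params m x y (Suc k)) True False h0 (H_column m S (Suc k))
         * partial_weight a m x y (Suc k) (H_column m S (Suc k)) T"
proof -
  have hS: "H_column m (S \<union> T) (Suc k) = H_column m S (Suc k)"
    using assms(3) by (intro H_column_eqI) (auto simp: H_right_of_def)
  have hT: "H_column m (S \<union> T) j = H_column m T j" if "Suc k < j" for j
    using assms(2) that by (intro H_column_eqI) auto
  have left: "left_of_column m h0 k (S \<union> T) j = left_of_column m (H_column m S (Suc k)) (Suc k) T j"
    if "Suc k < j" for j
    using that hS hT[of "j - 1"] by (auto simp: left_of_column_def)
  have "(\<Prod>j\<in>{Suc k..m}. column a (col_params m x y j) True False (left_of_column m h0 k (S \<union> T) j) (H_column m (S \<union> T) j))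
      = column a (col_params m x y (Suc k)) True False h0 (H_column m S (Suc k))
        * (\<Prod>j\<in>{Suc (Suc k)..m}. column a (col_params m x y j) True False
             (left_of_column m (H_column m S (Suc k)) (Suc k) T j) (H_column m T j))"
  proof -
    have "{Suc k..m} = insert (Suc k) {Suc (Suc k)..m}" using assms(1) by auto
    moreover have "left_of_column m h0 k (S \<union> T) (Suc k) = h0" by (simp add: left_of_column_def)
    moreover have "(\<Prod>j\<in>{Suc (Suc k)..m}. column a (col_params m x y j) True False (left_of_column m h0 k (S \<union> T) j) (H_column m (S \<union> T) j))
        = (\<Prod>j\<in>{Suc (Suc k)..m}. column a (col_params m x y j) True False
             (left_of_column m (H_column m S (Suc k)) (Suc k) T j) (H_column m T j))"
      using hT left by (intro prod.cong refl) auto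
    ultimately show ?thesis using hS by simp
  qed
  moreover have "uturn_weight a m x y (if k = m then h0 else H_column m (S \<union> T) m)
      = uturn_weight a m x y (if Suc k = m then H_column m S (Suc k) else H_column m T m)"
    using assms(1) hS hT[of m] by auto
  ultimately show ?thesis by (simp add: partial_weight_def mult.assoc)
qed

lemma sum_Pow_partial_weight:
  assumes "k \<le> m" "length h0 = 2*m+1"
  shows "(\<Sum>H\<in>Pow (H_right_of m k). partial_weight a m x y k h0 H)
       = columns a (map (col_params m x y) [Suc k..<Suc m]) (uturn_weight a m x y) h0"
  using assms
proof (induction k arbitrary: h0 rule: inc_induct)
  case base
  have "H_right_of m m = {}" by (auto simp: H_right_of_def)
  then show ?case by (simp add: partial_weight_def)
next
  case (step k)
  define C where "C = (\<lambda>r. (r, Suc k)) ` {1..<2*m+2}"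
  let ?rest = "columns a (map (col_params m x y) [Suc (Suc k)..<Suc m]) (uturn_weight a m x y)"
  have split: "H_right_of m k = C \<union> H_right_of m (Suc k)" "C \<inter> H_right_of m (Suc k) = {}"
    using step.hyps by (auto simp: H_right_of_def C_def)
  have "(\<Sum>H\<in>Pow (H_right_of m k). partial_weight a m x y k h0 H)
      = (\<Sum>S\<in>Pow C. \<Sum>T\<in>Pow (H_right_of m (Suc k)). partial_weight a m x y k h0 (S \<union> T))"
    unfolding split(1) using split(2) by (intro sum_Pow_Un) (auto simp: C_def)
  also have "\<dots> = (\<Sum>S\<in>Pow C. column a (col_params m x y (Suc k)) True False h0 (H_column m S (Suc k))
      * ?rest (H_column m S (Suc k)))"
  proof (intro sum.cong refl)
    fix S assume "S \<in> Pow C"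
    then have "(\<Sum>T\<in>Pow (H_right_of m (Suc k)). partial_weight a m x y k h0 (S \<union> T))
        = (\<Sum>T\<in>Pow (H_right_of m (Suc k)). column a (col_params m x y (Suc k)) True False h0 (H_column m S (Suc k))
            * partial_weight a m x y (Suc k) (H_column m S (Suc k)) T)"
      using step.hyps by (intro sum.cong refl partial_weight_Un) (auto simp: C_def)
    also have "\<dots> = column a (col_params m x y (Suc k)) True False h0 (H_column m S (Suc k)) * ?rest (H_column m S (Suc k))"
      using step.IH[of "H_column m S (Suc k)"] by (simp add: sum_distrib_left[symmetric])
    finally show "(\<Sum>T\<in>Pow (H_right_of m (Suc k)). partial_weight a m x y k h0 (S \<union> T))
        = column a (col_params m x y (Suc k)) True False h0 (H_column m S (Suc k)) * ?rest (H_column m S (Suc k))" .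
  qed
  also have "\<dots> = (\<Sum>h\<in>bool_lists (2*m+1). column a (col_params m x y (Suc k)) True False h0 h * ?rest h)"
    unfolding C_def by (rule sum_Pow_H_column)
  also have "\<dots> = columns a (map (col_params m x y) [Suc k..<Suc m]) (uturn_weight a m x y) h0"
    using step by (simp add: upt_conv_Cons)
  finally show ?case .
qed

lemma ht_Hdom_eq: "ht_Hdom m = {1..2*m+1} \<times> {1..m}" by (auto simp: ht_Hdom_def)
lemma finite_ht_Udom: "finite (ht_Udom m)"
proof -
  have "ht_Udom m \<subseteq> {1..2*m+1} \<times> {1..m+1}" by (auto simp: ht_Udom_def)
  then show ?thesis by (rule finite_subset) simp
qed
lemma finite_ht_verts: "finite (ht_verts m)"
proof -
  have "ht_verts m \<subseteq> {1..2*m+1} \<times> {1..m+1}" by (auto simp: ht_verts_def)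
  then show ?thesis by (rule finite_subset) simp
qed

lemma Z_HT_sum_Pow:
  "Z_HT m a x y = (\<Sum>H\<in>Pow (ht_Hdom m). \<Sum>U\<in>Pow (ht_Udom m). \<Prod>v\<in>ht_verts m. vertex_weight m a x y H U v)"
proof -
  have fin: "finite (ht_states m)" by (simp add: ht_states_def ht_Hdom_eq finite_ht_Udom)
  have "Z_HT m a x y = (\<Sum>s\<in>{s\<in>ht_states m. ht_valid m s}. \<Prod>v\<in>ht_verts m. vertex_weight m a x y (fst s) (snd s) v)"
    unfolding Z_HT_def vertex_weight_def by (simp add: split_def)
  also have "\<dots> = (\<Sum>s\<in>ht_states m. \<Prod>v\<in>ht_verts m. vertex_weight m a x y (fst s) (snd s) v)"
  proof (rule sum.mono_neutral_left[OF fin])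
    show "{s \<in> ht_states m. ht_valid m s} \<subseteq> ht_states m" by auto
    show "\<forall>s\<in>ht_states m - {s \<in> ht_states m. ht_valid m s}. (\<Prod>v\<in>ht_verts m. vertex_weight m a x y (fst s) (snd s) v) = 0"
    proof
      fix s assume "s \<in> ht_states m - {s \<in> ht_states m. ht_valid m s}"
      then have "\<not> ht_valid m s" by auto
      then obtain r j where rj: "(r,j) \<in> ht_verts m"
        "\<not> ice (left_right (fst s) r j) (right_right m (fst s) r j) (top_up m (fst s) (snd s) r j) (bot_up m (snd s) r j)"
        unfolding ht_valid_def by auto
      then have "vertex_weight m a x y (fst s) (snd s) (r,j) = 0" by (simp add: vertex_weight_def vweight_not_ice)
      then show "(\<Prod>v\<in>ht_verts m. vertex_weight m a x y (fst s) (snd s) v) = 0"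
        using rj(1) finite_ht_verts by (intro prod_zero) auto
    qed
  qed
  also have "\<dots> = (\<Sum>H\<in>Pow (ht_Hdom m). \<Sum>U\<in>Pow (ht_Udom m). \<Prod>v\<in>ht_verts m. vertex_weight m a x y H U v)"
    unfolding ht_states_def by (simp add: sum.cartesian_product split_def)
  finally show ?thesis .
qed

definition verts_column :: "nat \<Rightarrow> nat \<Rightarrow> (nat \<times> nat) set" where
  "verts_column m j = (\<lambda>r. (r,j)) ` (if j \<le> m then {1..<2*m+2} else {m+2..<2*m+2})"
definition Udom_column :: "nat \<Rightarrow> nat \<Rightarrow> (nat \<times> nat) set" where
  "Udom_column m j = (\<lambda>r. (r,j)) ` (if j \<le> m then {2..<2*m+2} else {m+3..<2*m+2})"

lemma ht_verts_UN: "ht_verts m = (\<Union>j\<in>{1..m+1}. verts_column m j)"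
  by (auto simp: ht_verts_def verts_column_def image_iff split: if_splits)

lemma ht_Udom_UN: "ht_Udom m = (\<Union>j\<in>{1..m+1}. Udom_column m j)"
  by (auto simp: ht_Udom_def Udom_column_def image_iff split: if_splits)

lemma vertex_weight_local:
  assumes "v \<in> verts_column m j" "j \<le> m+1"
  shows "vertex_weight m a x y H U v = vertex_weight m a x y H (U \<inter> Udom_column m j) v"
proof -
  obtain r where v: "v = (r,j)" and r: "r \<in> (if j \<le> m then {1..<2*m+2} else {m+2..<2*m+2})"
    using assms by (auto simp: verts_column_def)
  have t: "top_up m H U r j = top_up m H (U \<inter> Udom_column m j) r j"
    using r assms(2) by (auto simp: top_up_def Udom_column_def image_iff split: if_splits)
  have b: "bot_up m U r j = bot_up m (U \<inter> Udom_column m j) r j"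
    using r assms(2) by (auto simp: bot_up_def Udom_column_def image_iff split: if_splits)
  show ?thesis unfolding v vertex_weight_def using t b by simp
qed

lemma sum_Pow_Udom_prod:
  "(\<Sum>U\<in>Pow (ht_Udom m). \<Prod>v\<in>ht_verts m. vertex_weight m a x y H U v)
   = (\<Prod>j\<in>{1..m+1}. \<Sum>U\<in>Pow (Udom_column m j). \<Prod>v\<in>verts_column m j. vertex_weight m a x y H U v)"
proof -
  have "(\<Prod>v\<in>ht_verts m. vertex_weight m a x y H U v) = (\<Prod>j\<in>{1..m+1}. \<Prod>v\<in>verts_column m j. vertex_weight m a x y H U v)" for U
    unfolding ht_verts_UN
    by (rule prod.UNION_disjoint) (auto simp: verts_column_def)
  then have "(\<Sum>U\<in>Pow (ht_Udom m). \<Prod>v\<in>ht_verts m. vertex_weight m a x y H U v)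
      = (\<Sum>U\<in>Pow (\<Union>j\<in>{1..m+1}. Udom_column m j). \<Prod>j\<in>{1..m+1}. \<Prod>v\<in>verts_column m j. vertex_weight m a x y H U v)"
    unfolding ht_Udom_UN by simp
  also have "\<dots> = (\<Prod>j\<in>{1..m+1}. \<Sum>U\<in>Pow (Udom_column m j). \<Prod>v\<in>verts_column m j. vertex_weight m a x y H U v)"
  proof (rule sum_Pow_UN_prod)
    show "\<And>i j. i \<in> {1..m + 1} \<Longrightarrow> j \<in> {1..m + 1} \<Longrightarrow> i \<noteq> j \<Longrightarrow> Udom_column m i \<inter> Udom_column m j = {}"
      by (auto simp: Udom_column_def)
    show "\<And>i. i \<in> {1..m + 1} \<Longrightarrow> finite (Udom_column m i)" by (simp add: Udom_column_def)
    show "\<And>i U. i \<in> {1..m + 1} \<Longrightarrow> (\<Prod>v\<in>verts_column m i. vertex_weight m a x y H U v) = (\<Prod>v\<in>verts_column m i. vertex_weight m a x y H (U \<inter> Udom_column m i) v)"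
      by (intro prod.cong refl vertex_weight_local) auto
  qed simp
  finally show ?thesis .
qed

lemma Z_HT_eq_Z_transfer_pos:
  assumes "1 \<le> m"
  shows "Z_HT m a x y = Z_transfer m a x y"
proof -
  define h0 where "h0 = replicate (2*m+1) True"
  have S: "(\<Sum>U\<in>Pow (Udom_column m j). \<Prod>v\<in>verts_column m j. vertex_weight m a x y H U v) = column a (col_params m x y j) True False (left_of_column m h0 0 H j) (H_column m H j)"
    if "j \<in> {1..m}" for j H
  proof -
    have "map (\<lambda>r. left_right H r j) [1..<2*m+2] = left_of_column m h0 0 H j"
      by (intro nth_equalityI) (auto simp: left_of_column_def h0_def left_right_def nth_H_column nth_Cons')
    then show ?thesis using sum_Pow_inner_column[of j m a x y H] that by (simp add: Udom_column_def verts_column_def H_column_def)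
  qed
  have L: "(\<Sum>U\<in>Pow (Udom_column m (Suc m)). \<Prod>v\<in>verts_column m (Suc m). vertex_weight m a x y H U v) = uturn_weight a m x y (H_column m H m)" for H
    using sum_Pow_uturn_column[OF assms, of a x y H] uturn_weight_H_column[OF assms, of a x y H] by (simp add: Udom_column_def verts_column_def)
  have "Z_HT m a x y = (\<Sum>H\<in>Pow (ht_Hdom m). \<Prod>j\<in>{1..m+1}. \<Sum>U\<in>Pow (Udom_column m j). \<Prod>v\<in>verts_column m j. vertex_weight m a x y H U v)"
    by (simp add: Z_HT_sum_Pow sum_Pow_Udom_prod)
  also have "\<dots> = (\<Sum>H\<in>Pow (H_right_of m 0). partial_weight a m x y 0 h0 H)"
  proof -
    have "ht_Hdom m = H_right_of m 0" by (auto simp: ht_Hdom_def H_right_of_def)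
    moreover have "{1..m+1} = insert (Suc m) {1..m}" by auto
    ultimately show ?thesis using assms by (simp add: S L partial_weight_def mult.commute)
  qed
  also have "\<dots> = columns a (map (col_params m x y) [Suc 0..<Suc m]) (uturn_weight a m x y) h0"
    by (rule sum_Pow_partial_weight) (simp_all add: h0_def)
  also have "\<dots> = Z_transfer m a x y" by (simp add: Z_transfer_def h0_def)
  finally show ?thesis .
qed

lemma Z_HT_0: "Z_HT 0 a x y = 1"
proof -
  have "ht_states 0 = {({}, {})}" by (auto simp: ht_states_def ht_Hdom_def ht_Udom_def)
  moreover have "ht_verts 0 = {}" by (auto simp: ht_verts_def)
  ultimately show ?thesis by (simp add: Z_HT_def ht_valid_def)
qed

lemma Z_transfer_0: "Z_transfer 0 a x y = 1"
  by (simp add: Z_transfer_def uturn_weight_def uturn_params_def uturn_right_def)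

lemma Z_HT_eq_Z_transfer: "Z_HT m a x y = Z_transfer m a x y"
  using Z_HT_eq_Z_transfer_pos[of m] Z_HT_0 Z_transfer_0 by (cases "m = 0") auto

section \<open>Symmetry in the row parameters\<close>

lemma uturn_right_update:
  assumes "Suc k < m" "m \<le> length h"
  shows "uturn_right m (h[k:=u1, Suc k:=u2]) = (uturn_right m h)[m-2-k := \<not>u2, m-1-k := \<not>u1]"
  using assms by (intro nth_equalityI) (auto simp: nth_uturn_right nth_list_update)

lemma uturn_right_update_high:
  assumes "m \<le> k"
  shows "uturn_right m (h[k:=u1, Suc k:=u2]) = uturn_right m h"
  using assms by (simp add: uturn_right_def)

lemma drop_update2_high:
  assumes "Suc m \<le> k"
  shows "drop (Suc m) (h[k:=u1, Suc k:=u2]) = (drop (Suc m) h)[k - Suc m := u1, Suc (k - Suc m) := u2]"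
proof -
  have "k - m = Suc (k - Suc m)" using assms by simp
  then show ?thesis using assms by (simp add: drop_update_swap)
qed

lemma sum_UNIV_bool_neg_swap:
  "(\<Sum>u1\<in>UNIV. \<Sum>u2\<in>UNIV. f (\<not>u2) (\<not>u1)) = (\<Sum>w1\<in>(UNIV::bool set). \<Sum>w2\<in>(UNIV::bool set). f w1 w2)"
  by (simp add: sum_UNIV_bool algebra_simps)

text \<open>Seen from the half column, the rows k+1, k+2 are its right edges m-2-k, m-1-k (0-based), in
  reverse order and with reversed arrows. By rmat_half_turn the R-matrix becomes one on these right
  edges, and column_rmat_exchange moves it to the left edges of the half column, i.e. to the mirror
  rows 2m-k, 2m+1-k, exchanging x_(k+1) and x_(k+2) on the way.\<close>

lemma rmat_act_through_uturn:
  assumes a: "a \<noteq> 0" and km: "Suc (Suc k) \<le> m" and hl: "length h = 2*m+1"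
    and x: "\<forall>i\<in>{1..m+1}. x i \<noteq> 0" and y: "y (Suc m) \<noteq> 0"
  shows "rmat_act a k (x (Suc k) / x (Suc (Suc k))) (uturn_weight a m x y) h
       = rmat_act a (2*m-1-k) (x (Suc k) / x (Suc (Suc k))) (uturn_weight a m (x \<circ> transpose (Suc k) (Suc (Suc k))) y) h"
proof -
  define x' where "x' = x \<circ> transpose (Suc k) (Suc (Suc k))"
  define q where "q = x (Suc k) / x (Suc (Suc k))"
  define q' where "q' = m-2-k"
  define D where "D = drop (Suc m) h"
  define t where "t = (\<not> h!m)"
  have len_D: "length D = m" using hl by (simp add: D_def)
  have len_right: "length (uturn_right m h) = m" using hl by simp
  have q'_less: "Suc q' < m" using km by (simp add: q'_def)
  have right_nth: "uturn_right m h ! q' = (\<not> h!Suc k)" "uturn_right m h ! Suc q' = (\<not> h!k)"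
    using km hl by (auto simp: nth_uturn_right q'_def intro!: arg_cong[where f="(!) h"])
  have ratio: "uturn_params m x' y ! q' / uturn_params m x' y ! Suc q' = q"
    using km y x by (simp add: nth_uturn_params q'_def x'_def q_def Suc_diff_Suc numeral_2_eq_2 field_simps)
  have params_nonzero: "uturn_params m x' y ! q' \<noteq> 0" "uturn_params m x' y ! Suc q' \<noteq> 0"
    using km y x by (auto simp: nth_uturn_params q'_def x'_def Suc_diff_Suc numeral_2_eq_2 transpose_eq_iff)
  have swap_params: "swap_adj q' (uturn_params m x' y) = uturn_params m x y"
    using km by (intro nth_equalityI) (auto simp: nth_swap_adj nth_uturn_params q'_def x'_def transpose_def)
  have right_update: "uturn_right m (h[k:=u1, Suc k:=u2]) = (uturn_right m h)[q' := \<not>u2, Suc q' := \<not>u1]" for u1 u2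
    using uturn_right_update[of k m h u1 u2] km hl by (simp add: q'_def Suc_diff_Suc numeral_2_eq_2)
  define K where "K = 2*m-1-k"
  have K_eq: "K = Suc m + q'" using km by (simp add: K_def q'_def)
  have drop_update: "drop (Suc m) (h[K:=u1, Suc K:=u2]) = D[q':=u1, Suc q':=u2]" for u1 u2
    using drop_update2_high[of m K h u1 u2] K_eq by (simp add: D_def)
  have right_update_high: "uturn_right m (h[K:=u1, Suc K:=u2]) = uturn_right m h" for u1 u2
    using uturn_right_update_high[of m K h u1 u2] K_eq by simp
  have top_update: "(h[K:=u1, Suc K:=u2]) ! m = h ! m" for u1 u2
    using K_eq by (simp add: nth_list_update)
  have D_nth: "D!q' = h!K" "D!Suc q' = h!Suc K"
    using K_eq hl km by (simp_all add: D_def q'_def)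
  have "rmat_act a k q (uturn_weight a m x y) h
      = (\<Sum>u1\<in>UNIV. \<Sum>u2\<in>UNIV. rmat a q (\<not>u2) (\<not>u1) (uturn_right m h ! q') (uturn_right m h ! Suc q') *
            column a (uturn_params m x y) t False D ((uturn_right m h)[q' := \<not>u2, Suc q' := \<not>u1]))"
    unfolding rmat_act_def uturn_weight_def
    by (intro sum.cong refl, subst rmat_half_turn)
       (use km hl in \<open>simp add: right_update right_nth t_def D_def nth_list_update\<close>)
  also have "\<dots> = (\<Sum>w1\<in>UNIV. \<Sum>w2\<in>UNIV. rmat a q w1 w2 (uturn_right m h ! q') (uturn_right m h ! Suc q') *
            column a (uturn_params m x y) t False D ((uturn_right m h)[q' := w1, Suc q' := w2]))"
    by (rule sum_UNIV_bool_neg_swap)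
  also have "\<dots> = (\<Sum>w1\<in>UNIV. \<Sum>w2\<in>UNIV. column a (swap_adj q' (uturn_params m x' y)) t False D ((uturn_right m h)[q' := w1, Suc q' := w2]) * rmat a (uturn_params m x' y ! q' / uturn_params m x' y ! Suc q') w1 w2 (uturn_right m h ! q') (uturn_right m h ! Suc q'))"
    by (simp add: swap_params ratio mult.commute)
  also have "\<dots> = (\<Sum>u1\<in>UNIV. \<Sum>u2\<in>UNIV. rmat a (uturn_params m x' y ! q' / uturn_params m x' y ! Suc q') (D!q') (D!Suc q') u1 u2 * column a (uturn_params m x' y) t False (D[q':=u1, Suc q':=u2]) (uturn_right m h))"
    using a q'_less params_nonzero len_D len_right by (intro column_rmat_exchange[symmetric]) auto
  also have "\<dots> = rmat_act a K q (uturn_weight a m x' y) h"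
    unfolding rmat_act_def uturn_weight_def ratio
    by (intro sum.cong refl) (simp add: drop_update right_update_high top_update D_nth t_def)
  finally show ?thesis unfolding q_def x'_def K_def .
qed

lemma folded_row_range: "r < 2*m+1 \<Longrightarrow> min (Suc r) (2*m+1-r) \<in> {1..m+1}"
  by auto

lemma col_params_nonzero: "\<forall>i\<in>{1..m+1}. x i \<noteq> 0 \<Longrightarrow> y j \<noteq> 0 \<Longrightarrow> i < 2*m+1 \<Longrightarrow> col_params m x y j ! i \<noteq> 0"
  using folded_row_range[of i m] by (auto simp: nth_col_params)

lemma col_params_ratio:
  assumes "Suc i < 2*m+1" "\<forall>i\<in>{1..m+1}. x i \<noteq> 0" "y j \<noteq> 0"
  shows "col_params m x y j ! i \<noteq> 0 \<and> col_params m x y j ! Suc i \<noteq> 0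
       \<and> col_params m x y j ! i / col_params m x y j ! Suc i = x (min (Suc i) (2*m+1-i)) / x (min (Suc (Suc i)) (2*m-i))"
  using assms col_params_nonzero[where i = i] col_params_nonzero[where i = "Suc i"]
  by (auto simp: nth_col_params field_simps)

lemma swap_adj_col_params:
  assumes km: "Suc (Suc k) \<le> m"
  shows "swap_adj k (col_params m x y j) = swap_adj (2*m-1-k) (col_params m (x \<circ> transpose (Suc k) (Suc (Suc k))) y j)"
proof (intro nth_equalityI)
  fix i assume "i < length (swap_adj k (col_params m x y j))"
  then have i: "i < 2*m+1" by simp
  show "swap_adj k (col_params m x y j) ! i = swap_adj (2*m-1-k) (col_params m (x \<circ> transpose (Suc k) (Suc (Suc k))) y j) ! i"
    using km i by (auto simp: nth_swap_adj nth_col_params transpose_def min_def)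
qed simp

lemma Z_transfer_swap_x_generic:
  assumes a: "a \<noteq> 0" and km: "Suc (Suc k) \<le> m"
    and x: "\<forall>i\<in>{1..m+1}. x i \<noteq> 0" and y: "\<forall>i\<in>{1..m+1}. y i \<noteq> 0"
    and nd: "sig (a^2 * inverse (x (Suc k) / x (Suc (Suc k)))) \<noteq> 0"
  shows "Z_transfer m a (x \<circ> transpose (Suc k) (Suc (Suc k))) y = Z_transfer m a x y"
proof -
  define x' where "x' = x \<circ> transpose (Suc k) (Suc (Suc k))"
  define q where "q = x (Suc k) / x (Suc (Suc k))"
  define N where "N = 2*m+1"
  define K where "K = 2*m-1-k"
  define \<rho> where "\<rho> = sig (a^2 * inverse q)"
  have x': "\<forall>i\<in>{1..m+1}. x' i \<noteq> 0" using x km by (auto simp: x'_def transpose_def)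
  have kN: "Suc k < N" "Suc K < N" using km by (auto simp: N_def K_def)
  have cx: "\<forall>zs\<in>set (map (col_params m x y) [1..<Suc m]). length zs = N \<and> zs!k \<noteq> 0 \<and> zs!Suc k \<noteq> 0 \<and> zs!k/zs!Suc k = q"
    using km y col_params_ratio[OF _ x, of k] by (auto simp: N_def q_def)
  have cx': "\<forall>zs\<in>set (map (col_params m x' y) [1..<Suc m]). length zs = N \<and> zs!K \<noteq> 0 \<and> zs!Suc K \<noteq> 0 \<and> zs!K/zs!Suc K = q"
  proof -
    have "min (Suc K) (2*m+1-K) = Suc (Suc k)" "min (Suc (Suc K)) (2*m-K) = Suc k" "Suc K < 2*m+1"
      using km by (auto simp: K_def)
    moreover have "x' (Suc (Suc k)) = x (Suc k)" "x' (Suc k) = x (Suc (Suc k))"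
      by (simp_all add: x'_def)
    ultimately show ?thesis
      using y col_params_ratio[OF _ x', of K] by (auto simp: N_def q_def)
  qed
  have sw: "map (swap_adj k) (map (col_params m x y) [1..<Suc m]) = map (swap_adj K) (map (col_params m x' y) [1..<Suc m])"
    using swap_adj_col_params[OF km] by (simp add: K_def x'_def)
  have "\<rho> * Z_transfer m a x y = rmat_act a k q (columns a (map (col_params m x y) [1..<Suc m]) (uturn_weight a m x y)) (replicate N True)"
    by (simp only: Z_transfer_def \<rho>_def N_def rmat_act_all_True[OF kN(1)[unfolded N_def]])
  also have "\<dots> = columns a (map (swap_adj k) (map (col_params m x y) [1..<Suc m])) (rmat_act a k q (uturn_weight a m x y)) (replicate N True)"
    using a kN cx by (intro rmat_act_columns) auto
  also have "\<dots> = columns a (map (swap_adj K) (map (col_params m x' y) [1..<Suc m])) (rmat_act a K q (uturn_weight a m x' y)) (replicate N True)"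
    unfolding sw
    by (rule columns_cong) (use rmat_act_through_uturn[OF a km _ x] y in \<open>auto simp: q_def K_def x'_def N_def\<close>)
  also have "\<dots> = rmat_act a K q (columns a (map (col_params m x' y) [1..<Suc m]) (uturn_weight a m x' y)) (replicate N True)"
    using a kN cx' by (intro rmat_act_columns[symmetric]) auto
  also have "\<dots> = \<rho> * Z_transfer m a x' y"
    by (simp only: Z_transfer_def \<rho>_def N_def rmat_act_all_True[OF kN(2)[unfolded N_def]])
  finally have "\<rho> * Z_transfer m a x y = \<rho> * Z_transfer m a x' y" .
  moreover have "\<rho> \<noteq> 0" using nd by (simp add: \<rho>_def q_def)
  ultimately show ?thesis by (simp add: x'_def)
qed

section \<open>Symmetry in the column parameters\<close>

lemma upt_split_pair:
  assumes "1 \<le> j" "Suc j \<le> m"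
  shows "[1..<Suc m] = [1..<j] @ j # Suc j # [Suc (Suc j)..<Suc m]"
proof -
  have "[1..<Suc m] = [1..<j] @ [j..<j + (Suc m - j)]"
    using assms upt_add_eq_append[of 1 j "Suc m - j"] by simp
  also have "[j..<j + (Suc m - j)] = j # Suc j # [Suc (Suc j)..<Suc m]"
    using assms by (simp add: upt_conv_Cons)
  finally show ?thesis .
qed

lemma col_params_row_ratio:
  assumes "i < 2*m+1" "\<forall>i\<in>{1..m+1}. x i \<noteq> 0" "y j \<noteq> 0" "y j' \<noteq> 0"
  shows "col_params m x y j ! i / col_params m x y j' ! i = y j' / y j"
proof -
  have "x (min (Suc i) (2*m+1-i)) \<noteq> 0" using assms(1,2) folded_row_range[of i m] by auto
  then show ?thesis using assms by (simp add: nth_col_params field_simps)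
qed

lemma columns_swap_first_two:
  assumes "a \<noteq> 0" "length A = N" "length B = N" "length h = N"
    and "\<forall>i<N. A!i \<noteq> 0 \<and> B!i \<noteq> 0 \<and> A!i / B!i = q" "sig (a^2 * inverse q) \<noteq> 0"
  shows "columns a (B # A # rest) w h = columns a (A # B # rest) w h"
proof -
  have "column_pair a B A True True False False h h' = column_pair a A B True True False False h h'"
    if "h' \<in> bool_lists N" for h'
    using assms that by (intro column_pair_swap[symmetric]) (auto simp: bool_lists_def)
  then show ?thesis using columns_Cons_Cons[OF assms(4)] by (auto intro!: sum.cong)
qed

lemma Z_transfer_swap_y_generic:
  assumes a: "a \<noteq> 0" and j: "1 \<le> j" "Suc j \<le> m"
    and x: "\<forall>i\<in>{1..m+1}. x i \<noteq> 0" and y: "\<forall>i\<in>{1..m+1}. y i \<noteq> 0"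
    and nd: "sig (a^2 * inverse (y (Suc j) / y j)) \<noteq> 0"
  shows "Z_transfer m a x (y \<circ> transpose j (Suc j)) = Z_transfer m a x y"
proof -
  define y' where "y' = y \<circ> transpose j (Suc j)"
  define N where "N = 2*m+1"
  define A where "A = col_params m x y j"
  define B where "B = col_params m x y (Suc j)"
  define pre where "pre = map (col_params m x y) [1..<j]"
  define post where "post = map (col_params m x y) [Suc (Suc j)..<Suc m]"
  have e1: "map (col_params m x y) [1..<Suc m] = pre @ A # B # post"
    unfolding pre_def post_def A_def B_def using upt_split_pair[OF j] by simp
  have e2: "map (col_params m x y') [1..<Suc m] = pre @ B # A # post"
  proof -
    have "map (col_params m x y') [1..<j] = pre" unfolding pre_def
      by (auto simp: col_params_def spec_def y'_def)
    moreover have "map (col_params m x y') [Suc (Suc j)..<Suc m] = post" unfolding post_def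
      by (auto simp: col_params_def spec_def y'_def)
    moreover have "col_params m x y' j = B" "col_params m x y' (Suc j) = A"
      by (auto simp: col_params_def spec_def y'_def A_def B_def)
    ultimately show ?thesis using upt_split_pair[OF j] by simp
  qed
  have same_uturn: "uturn_weight a m x y' = uturn_weight a m x y"
  proof -
    have "uturn_params m x y' = uturn_params m x y" using j by (auto simp: uturn_params_def spec_def y'_def)
    then show ?thesis by (simp add: uturn_weight_def [abs_def])
  qed
  have ratio: "\<forall>i<N. A!i \<noteq> 0 \<and> B!i \<noteq> 0 \<and> A!i / B!i = y (Suc j) / y j"
    using j y col_params_nonzero[OF x] col_params_row_ratio[OF _ x] by (auto simp: A_def B_def N_def)
  have sw: "columns a (B#A#post) (uturn_weight a m x y) h = columns a (A#B#post) (uturn_weight a m x y) h"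
    if "length h = N" for h
    using a that ratio nd by (intro columns_swap_first_two) (auto simp: A_def B_def N_def)
  have "Z_transfer m a x y' = columns a pre (columns a (B#A#post) (uturn_weight a m x y)) (replicate N True)"
    unfolding Z_transfer_def e2 same_uturn N_def by (simp add: columns_append)
  also have "\<dots> = columns a pre (columns a (A#B#post) (uturn_weight a m x y)) (replicate N True)"
    by (rule columns_cong) (use sw in \<open>auto simp: N_def\<close>)
  also have "\<dots> = Z_transfer m a x y"
    unfolding Z_transfer_def e1 N_def by (simp add: columns_append)
  finally show ?thesis unfolding y'_def .
qed

section \<open>Removing the genericity assumptions\<close>

lemma isCont_vweight:
  assumes "a \<noteq> 0" "isCont f u0" "f u0 \<noteq> 0"
  shows "isCont (\<lambda>u. vweight a (f u) l r t b) u0"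
  using assms by (cases l; cases r; cases t; cases b) (auto simp: vweight_def sig_def intro!: continuous_intros)

lemma isCont_column:
  assumes "a \<noteq> 0" "\<forall>f\<in>set fs. isCont f u0 \<and> f u0 \<noteq> 0"
  shows "isCont (\<lambda>u. column a (map (\<lambda>f. f u) fs) t b L R) u0"
  using assms(2)
proof (induction fs arbitrary: t L R)
  case Nil
  then show ?case by (cases L; cases R) auto
next
  case (Cons f fs)
  show ?case
  proof (cases L)
    case Nil then show ?thesis by simp
  next
    case (Cons l L0)
    show ?thesis
    proof (cases R)
      case Nil then show ?thesis using Cons by simp
    next
      case (Cons r R0)
      show ?thesis using \<open>L = l#L0\<close> Cons Cons.IH Cons.prems \<open>a \<noteq> 0\<close>
        by (simp, intro continuous_intros isCont_vweight) auto
    qed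
  qed
qed

lemma isCont_columns:
  assumes "a \<noteq> 0" "\<forall>zsf\<in>set zssf. \<forall>f\<in>set zsf. isCont f u0 \<and> f u0 \<noteq> 0"
    and "\<And>h. isCont (\<lambda>u. w u h) u0"
  shows "isCont (\<lambda>u. columns a (map (map (\<lambda>f. f u)) zssf) (w u) h) u0"
  using assms(2)
proof (induction zssf arbitrary: h)
  case Nil
  then show ?case using assms(3) by simp
next
  case (Cons zsf zssf)
  then show ?case using assms(1)
    by (simp, intro continuous_intros isCont_column) auto
qed

lemma isCont_Z_transfer:
  assumes a: "a \<noteq> 0"
    and X: "\<forall>i\<in>{1..m+1}. isCont (\<lambda>u. X u i) u0 \<and> X u0 i \<noteq> 0"
    and Y: "\<forall>i\<in>{1..m+1}. isCont (\<lambda>u. Y u i) u0 \<and> Y u0 i \<noteq> 0"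
  shows "isCont (\<lambda>u. Z_transfer m a (X u) (Y u)) u0"
proof -
  define zssf where "zssf = map (\<lambda>j. map (\<lambda>r u. spec m (X u) (Y u) r j) [1..<2*m+2]) [1..<Suc m]"
  define zLf where "zLf = map (\<lambda>r u. spec m (X u) (Y u) r (Suc m)) [m+2..<2*m+2]"
  have e: "Z_transfer m a (X u) (Y u) = columns a (map (map (\<lambda>f. f u)) zssf) (\<lambda>h. column a (map (\<lambda>f. f u) zLf) (\<not> h!m) False (drop (Suc m) h) (uturn_right m h)) (replicate (2*m+1) True)" for u
    by (simp add: Z_transfer_def zssf_def zLf_def col_params_def[abs_def] uturn_params_def uturn_weight_def[abs_def] comp_def)
  have sp: "isCont (\<lambda>u. spec m (X u) (Y u) r j) u0 \<and> spec m (X u0) (Y u0) r j \<noteq> 0"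
    if "1 \<le> r" "r \<le> 2*m+1" "1 \<le> j" "j \<le> m+1" for r j
  proof -
    have "min r (2*m+2-r) \<in> {1..m+1}" using that by auto
    then show ?thesis using X Y that unfolding spec_def by (auto intro!: continuous_intros)
  qed
  show ?thesis unfolding e
  proof (rule isCont_columns[OF a])
    show "\<forall>zsf\<in>set zssf. \<forall>f\<in>set zsf. isCont f u0 \<and> f u0 \<noteq> 0"
      unfolding zssf_def using sp by auto
    show "isCont (\<lambda>u. column a (map (\<lambda>f. f u) zLf) (\<not> h!m) False (drop (Suc m) h) (uturn_right m h)) u0" for h
      by (rule isCont_column[OF a]) (use sp in \<open>auto simp: zLf_def\<close>)
  qed
qed

lemma isCont_eq_off_finite:
  fixes f g :: "complex \<Rightarrow> complex"
  assumes "isCont f u0" "isCont g u0" "finite S" "\<And>u. u \<notin> S \<Longrightarrow> f u = g u"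
  shows "f u0 = g u0"
proof -
  have "eventually (\<lambda>u. \<forall>s\<in>S. u \<noteq> s) (at u0)"
    using assms(3) by (intro eventually_ball_finite) (auto intro: eventually_neq_at_within)
  then have ev: "eventually (\<lambda>u. f u = g u) (at u0)"
    by eventually_elim (use assms(4) in auto)
  have "(f \<longlongrightarrow> f u0) (at u0)" using assms(1) isCont_def by blast
  then have h1: "(g \<longlongrightarrow> f u0) (at u0)" using ev by (rule Lim_transform_eventually)
  have h2: "(g \<longlongrightarrow> g u0) (at u0)" using assms(2) isCont_def by blast
  show ?thesis using tendsto_unique[OF at_neq_bot h1 h2] .
qed

lemma sig_eq_0D: "w \<noteq> 0 \<Longrightarrow> sig w = 0 \<Longrightarrow> w = 1 \<or> w = -1"
proof -
  assume "w \<noteq> 0" and h: "sig w = 0"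
  then have "(w - 1) * (w + 1) = 0" by (simp add: sig_def field_simps)
  then show ?thesis by (auto simp: eq_neg_iff_add_eq_0)
qed

lemma isCont_eq_if_sig_nonzero:
  fixes f g :: "complex \<Rightarrow> complex"
  assumes "isCont f p" "isCont g p" "c \<noteq> 0"
    and "\<And>u. u \<noteq> 0 \<Longrightarrow> sig (c * u) \<noteq> 0 \<Longrightarrow> f u = g u"
  shows "f p = g p"
proof (rule isCont_eq_off_finite[OF assms(1,2)])
  show "finite {0, inverse c, - inverse c}" by simp
  fix u assume u: "u \<notin> {0, inverse c, - inverse c}"
  have "sig (c * u) \<noteq> 0"
  proof
    assume "sig (c * u) = 0"
    then have "c * u = 1 \<or> c * u = -1" using u assms(3) by (intro sig_eq_0D) auto
    then show False using u assms(3) by (auto simp: field_simps)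
  qed
  then show "f u = g u" using u by (intro assms(4)) auto
qed

lemma isCont_if_id: "isCont (\<lambda>u::complex. if P then u else c) u0"
  by (cases P) auto

lemma Z_transfer_swap_x:
  assumes a: "a \<noteq> 0" and km: "Suc (Suc k) \<le> m"
    and x: "\<forall>i\<in>{1..m+1}. x i \<noteq> 0" and y: "\<forall>i\<in>{1..m+1}. y i \<noteq> 0"
  shows "Z_transfer m a (x \<circ> transpose (Suc k) (Suc (Suc k))) y = Z_transfer m a x y"
proof -
  define \<tau> where "\<tau> = transpose (Suc k) (Suc (Suc k))"
  define X where "X u = x(Suc (Suc k) := u)" for u
  have cont: "isCont (\<lambda>u. Z_transfer m a (X u \<circ> \<sigma>) y) (x (Suc (Suc k)))" if "\<sigma> ` {1..m+1} \<subseteq> {1..m+1}" for \<sigma>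
    using x y that by (intro isCont_Z_transfer[OF a]) (auto simp: X_def isCont_if_id)
  have "Z_transfer m a (X (x (Suc (Suc k))) \<circ> \<tau>) y = Z_transfer m a (X (x (Suc (Suc k))) \<circ> id) y"
  proof (rule isCont_eq_if_sig_nonzero[where c = "a^2 / x (Suc k)" and p = "x (Suc (Suc k))"
        and f = "\<lambda>u. Z_transfer m a (X u \<circ> \<tau>) y" and g = "\<lambda>u. Z_transfer m a (X u \<circ> id) y"])
    show "isCont (\<lambda>u. Z_transfer m a (X u \<circ> \<tau>) y) (x (Suc (Suc k)))"
      using km by (intro cont) (auto simp: \<tau>_def transpose_def)
    show "isCont (\<lambda>u. Z_transfer m a (X u \<circ> id) y) (x (Suc (Suc k)))"
      by (intro cont) auto
    show "a^2 / x (Suc k) \<noteq> 0" using a x km by auto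
    fix u :: complex assume u: "u \<noteq> 0" "sig (a^2 / x (Suc k) * u) \<noteq> 0"
    have Xu: "\<forall>i\<in>{1..m+1}. X u i \<noteq> 0" using x u by (auto simp: X_def)
    have "a^2 * inverse (X u (Suc k) / X u (Suc (Suc k))) = a^2 / x (Suc k) * u"
      by (simp add: X_def field_simps)
    then show "Z_transfer m a (X u \<circ> \<tau>) y = Z_transfer m a (X u \<circ> id) y"
      using Z_transfer_swap_x_generic[OF a km Xu y] u by (simp add: \<tau>_def)
  qed
  then show ?thesis by (simp add: X_def \<tau>_def)
qed

lemma Z_transfer_swap_y:
  assumes a: "a \<noteq> 0" and j: "1 \<le> j" "Suc j \<le> m"
    and x: "\<forall>i\<in>{1..m+1}. x i \<noteq> 0" and y: "\<forall>i\<in>{1..m+1}. y i \<noteq> 0"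
  shows "Z_transfer m a x (y \<circ> transpose j (Suc j)) = Z_transfer m a x y"
proof -
  define \<tau> where "\<tau> = transpose j (Suc j)"
  define Y where "Y u = y(j := u)" for u
  have cont: "isCont (\<lambda>u. Z_transfer m a x (Y u \<circ> \<sigma>)) (y j)" if "\<sigma> ` {1..m+1} \<subseteq> {1..m+1}" for \<sigma>
    using x y that by (intro isCont_Z_transfer[OF a]) (auto simp: Y_def isCont_if_id)
  have "Z_transfer m a x (Y (y j) \<circ> \<tau>) = Z_transfer m a x (Y (y j) \<circ> id)"
  proof (rule isCont_eq_if_sig_nonzero[where c = "a^2 / y (Suc j)" and p = "y j"
        and f = "\<lambda>u. Z_transfer m a x (Y u \<circ> \<tau>)" and g = "\<lambda>u. Z_transfer m a x (Y u \<circ> id)"])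
    show "isCont (\<lambda>u. Z_transfer m a x (Y u \<circ> \<tau>)) (y j)"
      using j by (intro cont) (auto simp: \<tau>_def transpose_def)
    show "isCont (\<lambda>u. Z_transfer m a x (Y u \<circ> id)) (y j)"
      by (intro cont) auto
    show "a^2 / y (Suc j) \<noteq> 0" using a y j by auto
    fix u :: complex assume u: "u \<noteq> 0" "sig (a^2 / y (Suc j) * u) \<noteq> 0"
    have Yu: "\<forall>i\<in>{1..m+1}. Y u i \<noteq> 0" using y u by (auto simp: Y_def)
    have "a^2 * inverse (Y u (Suc j) / Y u j) = a^2 / y (Suc j) * u"
      by (simp add: Y_def field_simps)
    then show "Z_transfer m a x (Y u \<circ> \<tau>) = Z_transfer m a x (Y u \<circ> id)"
      using Z_transfer_swap_y_generic[OF a j x Yu] u by (simp add: \<tau>_def)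
  qed
  then show ?thesis by (simp add: Y_def \<tau>_def)
qed

section \<open>The specialisation y_1 = a x_1\<close>

lemma col_params_Suc:
  assumes "1 \<le> j"
  shows "col_params (Suc n) x y j = (x 1 * inverse (y j)) # col_params n (\<lambda>i. x (i+1)) (\<lambda>i. y (i+1)) (j-1) @ [x 1 * inverse (y j)]"
proof -
  have u: "[1..<2 * Suc n + 2] = 1 # map Suc [1..<2*n+2] @ [2*n+3]"
    by (simp add: map_Suc_upt upt_conv_Cons upt_Suc)
  have "spec (Suc n) x y (Suc r) j = spec n (\<lambda>i. x (i+1)) (\<lambda>i. y (i+1)) r (j-1)" if "r \<in> set [1..<2*n+2]" for r
  proof -
    have "min (Suc r) (2 * Suc n + 2 - Suc r) = Suc (min r (2*n+2-r))" using that by auto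
    then show ?thesis using assms by (simp add: spec_def)
  qed
  then show ?thesis unfolding col_params_def u
    by (simp add: spec_def)
qed

lemma uturn_params_Suc:
  "uturn_params (Suc n) x y = uturn_params n (\<lambda>i. x (i+1)) (\<lambda>i. y (i+1)) @ [x 1 * inverse (y (Suc (Suc n)))]"
proof -
  have u: "[Suc n + 2..<2 * Suc n + 2] = map Suc [n+2..<2*n+2] @ [2*n+3]"
    by (simp add: map_Suc_upt upt_Suc)
  have "spec (Suc n) x y (Suc r) (Suc (Suc n)) = spec n (\<lambda>i. x (i+1)) (\<lambda>i. y (i+1)) r (Suc n)" if "r \<in> set [n+2..<2*n+2]" for r
  proof -
    have "min (Suc r) (2 * Suc n + 2 - Suc r) = Suc (min r (2*n+2-r))" using that by auto
    then show ?thesis by (simp add: spec_def)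
  qed
  then show ?thesis unfolding uturn_params_def u
    by (simp add: spec_def)
qed

lemma uturn_weight_Suc:
  assumes "length mid = 2*n+1"
  shows "uturn_weight a (Suc n) x y (False # mid @ [True])
       = sig (a * inverse (x 1 * inverse (y (Suc (Suc n))))) * uturn_weight a n (\<lambda>i. x (i+1)) (\<lambda>i. y (i+1)) mid"
proof -
  have d: "drop (Suc (Suc n)) (False # mid @ [True]) = drop (Suc n) mid @ [True]"
    using assms by simp
  have t: "take (Suc n) (False # mid @ [True]) = False # take n mid" using assms by simp
  have r: "uturn_right (Suc n) (False # mid @ [True]) = uturn_right n mid @ [True]"
    unfolding uturn_right_def t by simp
  have h: "(False # mid @ [True]) ! Suc n = mid ! n" using assms by (simp add: nth_append)
  show ?thesis unfolding uturn_weight_def uturn_params_Suc d r h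
    by (subst column_bottom_True) (use assms in \<open>simp_all add: uturn_right_def\<close>)
qed

lemma column_zero_hd:
  assumes "R \<noteq> []" "hd R"
  shows "column a zs True b (False#L) R = 0"
proof (cases zs)
  case Nil then show ?thesis by simp
next
  case (Cons z zs0)
  obtain r R0 where "R = r#R0" using assms by (cases R) auto
  then show ?thesis using assms Cons by (simp add: sum_UNIV_bool vweight_def)
qed

lemma column_zero_last:
  assumes "length L = length zs" "length R = length zs" "zs \<noteq> []" "\<not> last L" "last R"
  shows "column a zs t False L R = 0"
proof -
  have ne: "L \<noteq> []" "R \<noteq> []" using assms by auto
  have e: "last L = False" "last R = True" using assms by auto
  have "zs = butlast zs @ [last zs]" "L = butlast L @ [False]" "R = butlast R @ [True]"
    using assms(3) append_butlast_last_id[OF ne(1)] append_butlast_last_id[OF ne(2)] e by auto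
  then have "column a zs t False L R = column a (butlast zs @ [last zs]) t False (butlast L @ [False]) (butlast R @ [True])"
    using assms by (metis (full_types))
  also have "\<dots> = 0" using assms by (subst column_bottom_False) auto
  finally show ?thesis .
qed

text \<open>If the first and the last row start with an arrow pointing left, the top and bottom vertices
  of every column pass this on to their right. This is impossible at the half column, whose lowest
  right edge is the top right edge of column m with its direction reversed.\<close>

lemma columns_uturn_zero:
  assumes "1 \<le> m" "\<forall>zs\<in>set zss. length zs = 2*m+1"
    and "length h = 2*m+1" "\<not> hd h" "\<not> last h"
  shows "columns a zss (uturn_weight a m x y) h = 0"
  using assms(2-5)
proof (induction zss arbitrary: h)
  case Nil
  have "uturn_weight a m x y h = 0" unfolding uturn_weight_def
  proof (rule column_zero_last)
    show "length (drop (Suc m) h) = length (uturn_params m x y)" "length (uturn_right m h) = length (uturn_params m x y)"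
      using Nil by auto
    show "uturn_params m x y \<noteq> []" using assms(1) by (simp add: uturn_params_def)
    show "\<not> last (drop (Suc m) h)" using Nil assms(1) by (simp add: last_drop)
    show "last (uturn_right m h)" using Nil assms(1) by (cases h; cases m) (auto simp: uturn_right_def)
  qed
  then show ?case by simp
next
  case (Cons zs zss)
  have "column a zs True False h h' * columns a zss (uturn_weight a m x y) h' = 0" if "h' \<in> bool_lists (length h)" for h'
  proof (cases "hd h'")
    case True
    have "h = False # tl h" using Cons.prems by (cases h) auto
    moreover have "h' \<noteq> []" using that Cons.prems by (auto simp: bool_lists_def)
    ultimately have "column a zs True False h h' = 0"
      using column_zero_hd[of h' a zs False "tl h"] True by simp
    then show ?thesis by simp
  next
    case False
    show ?thesis
    proof (cases "last h'")
      case True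
      have "column a zs True False h h' = 0"
        using Cons.prems that True by (intro column_zero_last) (auto simp: bool_lists_def)
      then show ?thesis by simp
    next
      case False
      then show ?thesis using Cons.IH[of h'] Cons.prems that \<open>\<not> hd h'\<close> by (auto simp: bool_lists_def)
    qed
  qed
  then show ?case by (simp del: mult_eq_0_iff)
qed

lemma column_frozen_ends:
  assumes "length mid = length zm" "length h = length zm"
  shows "column a (z0 # zm @ [z0]) True False (False # mid @ [True]) (False # h @ [True])
       = (sig (a * inverse z0))^2 * column a zm True False mid h"
  using assms by (simp add: column_bottom_True power2_eq_square sum_UNIV_bool vweight_def)

lemma columns_peel_rows:
  assumes "length mid = length zm"
    and vanish: "\<And>h. length h = length zm \<Longrightarrow> columns a zss w (False # h @ [False]) = 0"
  shows "columns a ((z0 # zm @ [z0]) # zss) w (False # mid @ [True])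
       = (sig (a * inverse z0))^2 *
         (\<Sum>h\<in>bool_lists (length zm). column a zm True False mid h * columns a zss w (False # h @ [True]))"
proof -
  let ?N = "length zm"
  let ?col = "column a (z0 # zm @ [z0]) True False (False # mid @ [True])"
  have "columns a ((z0 # zm @ [z0]) # zss) w (False # mid @ [True])
      = (\<Sum>h\<in>bool_lists (Suc (Suc ?N)). ?col h * columns a zss w h)"
    using assms(1) by simp
  also have "\<dots> = (\<Sum>c\<in>UNIV. \<Sum>d\<in>UNIV. \<Sum>h\<in>bool_lists ?N. ?col (c # h @ [d]) * columns a zss w (c # h @ [d]))"
    unfolding sum_bool_lists_Suc[where n = "Suc ?N"] sum_bool_lists_snoc[where k = ?N] by simp
  also have "\<dots> = (\<Sum>h\<in>bool_lists ?N. ?col (False # h @ [True]) * columns a zss w (False # h @ [True]))"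
  proof -
    have top_down: "?col (True # h) = 0" for h
      by (rule column_zero_hd) simp_all
    have "(\<Sum>h\<in>bool_lists ?N. ?col (False # h @ [False]) * columns a zss w (False # h @ [False])) = 0"
      by (intro sum.neutral) (simp add: vanish bool_lists_def)
    then show ?thesis by (simp add: sum_UNIV_bool top_down del: column.simps)
  qed
  also have "\<dots> = (\<Sum>h\<in>bool_lists ?N. (sig (a * inverse z0))^2 *
      (column a zm True False mid h * columns a zss w (False # h @ [True])))"
    using assms(1) by (intro sum.cong refl) (simp add: column_frozen_ends bool_lists_def del: column.simps)
  also have "\<dots> = (sig (a * inverse z0))^2 *
      (\<Sum>h\<in>bool_lists ?N. column a zm True False mid h * columns a zss w (False # h @ [True]))"
    by (simp add: sum_distrib_left)
  finally show ?thesis .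
qed

lemma columns_peel_frozen_rows:
  fixes x y :: "nat \<Rightarrow> complex"
  defines "x' \<equiv> \<lambda>i. x (i+1)" and "y' \<equiv> \<lambda>i. y (i+1)"
  assumes "j \<le> Suc (Suc n)" "2 \<le> j" "length mid = 2*n+1"
  shows "columns a (map (col_params (Suc n) x y) [j..<Suc (Suc n)]) (uturn_weight a (Suc n) x y) (False # mid @ [True])
   = sig (a * inverse (x 1 * inverse (y (Suc (Suc n))))) * (\<Prod>i\<in>{j..Suc n}. (sig (a * inverse (x 1 * inverse (y i))))^2)
     * columns a (map (col_params n x' y') [j - 1..<Suc n]) (uturn_weight a n x' y') mid"
  using assms(3-5)
proof (induction j arbitrary: mid rule: inc_induct)
  case base
  then show ?case by (simp add: uturn_weight_Suc x'_def y'_def)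
next
  case (step j)
  define z0 where "z0 = x 1 * inverse (y j)"
  define rest where "rest = map (col_params (Suc n) x y) [Suc j..<Suc (Suc n)]"
  define C where "C = sig (a * inverse (x 1 * inverse (y (Suc (Suc n)))))"
  define P where "P = (\<Prod>i\<in>{Suc j..Suc n}. (sig (a * inverse (x 1 * inverse (y i))))^2)"
  define zm where "zm = col_params n x' y' (j - 1)"
  have first: "col_params (Suc n) x y j = z0 # zm @ [z0]"
    unfolding z0_def zm_def x'_def y'_def using step by (intro col_params_Suc) simp
  have split: "map (col_params (Suc n) x y) [j..<Suc (Suc n)] = (z0 # zm @ [z0]) # rest"
    using step.hyps by (simp add: upt_conv_Cons first rest_def)
  have vanish: "columns a rest (uturn_weight a (Suc n) x y) (False # h @ [False]) = 0"
    if "length h = length zm" for h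
    using that by (intro columns_uturn_zero) (auto simp: rest_def zm_def)
  have IH: "columns a rest (uturn_weight a (Suc n) x y) (False # h @ [True])
      = C * P * columns a (map (col_params n x' y') [j..<Suc n]) (uturn_weight a n x' y') h"
    if "length h = length zm" for h
    using step.IH[of h] step.prems that unfolding rest_def C_def P_def zm_def by simp
  have "columns a (map (col_params (Suc n) x y) [j..<Suc (Suc n)]) (uturn_weight a (Suc n) x y) (False # mid @ [True])
      = (sig (a * inverse z0))^2 *
        (\<Sum>h\<in>bool_lists (length zm). column a zm True False mid h * columns a rest (uturn_weight a (Suc n) x y) (False # h @ [True]))"
    unfolding split by (rule columns_peel_rows) (use step.prems vanish in \<open>auto simp: zm_def\<close>)
  also have "\<dots> = (sig (a * inverse z0))^2 *
        (\<Sum>h\<in>bool_lists (length zm). column a zm True False mid h * (C * P * columns a (map (col_params n x' y') [j..<Suc n]) (uturn_weight a n x' y') h))"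
    by (intro arg_cong[where f = "\<lambda>s. (sig (a * inverse z0))^2 * s"] sum.cong refl) (simp add: IH bool_lists_def)
  also have "\<dots> = (sig (a * inverse z0))^2 * C * P *
        (\<Sum>h\<in>bool_lists (length zm). column a zm True False mid h * columns a (map (col_params n x' y') [j..<Suc n]) (uturn_weight a n x' y') h)"
    by (simp add: sum_distrib_left mult_ac)
  also have "\<dots> = C * (\<Prod>i\<in>{j..Suc n}. (sig (a * inverse (x 1 * inverse (y i))))^2)
     * columns a (map (col_params n x' y') [j - 1..<Suc n]) (uturn_weight a n x' y') mid"
  proof -
    have "{j..Suc n} = insert j {Suc j..Suc n}" using step.hyps by auto
    moreover have "[j - 1..<Suc n] = (j - 1) # [j..<Suc n]" using step by (simp add: upt_conv_Cons)
    ultimately show ?thesis using step.prems by (simp add: z0_def P_def zm_def mult_ac)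
  qed
  finally show ?case by (simp add: C_def)
qed

lemma columns_first_column_frozen:
  assumes "a \<noteq> 0" "length zs = N"
  shows "columns a ((inverse a # zs) # zss) w (replicate (Suc N) True)
       = sig (a^2) * (\<Prod>z\<leftarrow>zs. sig (a * inverse z)) * columns a zss w (False # replicate N True)"
proof -
  define K where "K = sig (a^2) * (\<Prod>z\<leftarrow>zs. sig (a * inverse z))"
  have "column a (inverse a # zs) True False (replicate (Suc N) True) h * columns a zss w h
      = (if h = False # replicate N True then K * columns a zss w h else 0)"
    if "h \<in> bool_lists (Suc N)" for h
  proof -
    have "length h = Suc N" using that by (simp add: bool_lists_def)
    then obtain r R where "h = r # R" "length R = N" by (metis length_Suc_conv)
    then show ?thesis using column_first_row_frozen[of a R zs r] assms by (auto simp: K_def)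
  qed
  moreover have that_in: "False # replicate N True \<in> bool_lists (Suc N)"
    by (simp add: bool_lists_def)
  ultimately have "columns a ((inverse a # zs) # zss) w (replicate (Suc N) True)
      = (\<Sum>h\<in>bool_lists (Suc N). if h = False # replicate N True then K * columns a zss w h else 0)"
    by (simp cong: sum.cong)
  also have "\<dots> = K * columns a zss w (False # replicate N True)"
    using that_in by (subst sum.delta) simp_all
  finally show ?thesis by (simp add: K_def)
qed

lemma prod_folded_rows:
  fixes g :: "nat \<Rightarrow> complex"
  shows "(\<Prod>r\<in>{1..<2*n+2}. g (min r (2*n+2-r) + 1)) = g (n+2) * (\<Prod>i\<in>{2..n+1}. (g i)^2)"
proof -
  have s: "{1..<2*n+2} = {1..n} \<union> insert (n+1) {n+2..2*n+1}" by auto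
  have "(\<Prod>r\<in>{1..<2*n+2}. g (min r (2*n+2-r) + 1))
      = (\<Prod>r\<in>{1..n}. g (min r (2*n+2-r) + 1)) * (g (n+2) * (\<Prod>r\<in>{n+2..2*n+1}. g (min r (2*n+2-r) + 1)))"
    unfolding s by (subst prod.union_disjoint) auto
  also have "(\<Prod>r\<in>{1..n}. g (min r (2*n+2-r) + 1)) = (\<Prod>i\<in>{2..n+1}. g i)"
  proof -
    have "(\<Prod>r\<in>{1..n}. g (min r (2*n+2-r) + 1)) = (\<Prod>r\<in>{1..n}. g (r + 1))"
      by (intro prod.cong refl) auto
    also have "\<dots> = (\<Prod>i\<in>{2..n+1}. g i)"
      by (rule prod.reindex_bij_witness[of _ "\<lambda>i. i - 1" "\<lambda>r. r + 1"]) auto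
    finally show ?thesis .
  qed
  also have "(\<Prod>r\<in>{n+2..2*n+1}. g (min r (2*n+2-r) + 1)) = (\<Prod>i\<in>{2..n+1}. g i)"
  proof -
    have "(\<Prod>r\<in>{n+2..2*n+1}. g (min r (2*n+2-r) + 1)) = (\<Prod>r\<in>{n+2..2*n+1}. g (2*n+3-r))"
      by (intro prod.cong refl) (auto simp: numeral_3_eq_3 Suc_diff_le)
    also have "\<dots> = (\<Prod>i\<in>{2..n+1}. g i)"
      by (rule prod.reindex_bij_witness[of _ "\<lambda>i. 2*n+3-i" "\<lambda>r. 2*n+3-r"]) auto
    finally show ?thesis .
  qed
  finally show ?thesis by (simp add: power2_eq_square prod.distrib mult_ac)
qed

lemma Z_transfer_reduce:
  fixes a :: complex and x y :: "nat \<Rightarrow> complex"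
  defines "x' \<equiv> \<lambda>i. x (i+1)" and "y' \<equiv> \<lambda>i. y (i+1)"
    and "A \<equiv> \<lambda>i. sig (a * inverse (x 1) * y i)" and "B \<equiv> \<lambda>i. sig (a * inverse (x i) * y 1)"
  assumes a: "a \<noteq> 0" and x1: "x 1 \<noteq> 0" and y1: "y 1 = a * x 1"
  shows "Z_transfer (Suc n) a x y =
      (sig (a^2))^2 * A (n+2) * B (n+2) * (\<Prod>i=2..Suc n. (A i)^2 * (B i)^2) * Z_transfer n a x' y'"
proof -
  define zs where "zs = col_params n x' y' 0"
  have "x 1 * inverse (y 1) = inverse a" using y1 x1 a by (simp add: field_simps)
  then have first: "col_params (Suc n) x y 1 = inverse a # zs @ [inverse a]"
    using col_params_Suc[of 1 n x y] by (simp add: zs_def x'_def y'_def)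
  have prod_zs: "(\<Prod>z\<leftarrow>zs. sig (a * inverse z)) = B (n+2) * (\<Prod>i\<in>{2..n+1}. (B i)^2)"
  proof -
    have "(\<Prod>z\<leftarrow>zs. sig (a * inverse z)) = (\<Prod>r\<leftarrow>[1..<2*n+2]. B (min r (2*n+2-r) + 1))"
      by (simp add: zs_def col_params_def spec_def x'_def y'_def B_def o_def inverse_mult_distrib mult.assoc)
    also have "\<dots> = (\<Prod>r\<in>{1..<2*n+2}. B (min r (2*n+2-r) + 1))"
      by (subst prod.distinct_set_conv_list[symmetric]) simp_all
    finally show ?thesis unfolding prod_folded_rows .
  qed
  have cols: "map (col_params (Suc n) x y) [1..<Suc (Suc n)]
      = (inverse a # zs @ [inverse a]) # map (col_params (Suc n) x y) [2..<Suc (Suc n)]"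
    using first by (simp add: upt_conv_Cons numeral_2_eq_2)
  have "Z_transfer (Suc n) a x y = columns a ((inverse a # zs @ [inverse a]) # map (col_params (Suc n) x y) [2..<Suc (Suc n)])
      (uturn_weight a (Suc n) x y) (replicate (Suc (2*n+2)) True)"
    unfolding Z_transfer_def cols by simp
  also have "\<dots> = sig (a^2) * (\<Prod>z\<leftarrow>zs @ [inverse a]. sig (a * inverse z))
      * columns a (map (col_params (Suc n) x y) [2..<Suc (Suc n)]) (uturn_weight a (Suc n) x y) (False # replicate (2*n+1) True @ [True])"
    using a by (subst columns_first_column_frozen) (simp_all add: zs_def replicate_append_same)
  also have "\<dots> = sig (a^2) * (\<Prod>z\<leftarrow>zs @ [inverse a]. sig (a * inverse z))
      * (A (Suc (Suc n)) * (\<Prod>i\<in>{2..Suc n}. (A i)^2) * Z_transfer n a x' y')"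
    using columns_peel_frozen_rows[of 2 n "replicate (2*n+1) True" a x y]
    by (simp add: A_def Z_transfer_def x'_def y'_def inverse_mult_distrib mult.assoc)
  finally show ?thesis
    by (simp add: prod_zs prod.distrib power2_eq_square mult_ac)
qed

lemma Z_HT_reduce:
  assumes "1 \<le> m" "a \<noteq> 0" "\<forall>i\<in>{1..m+1}. x i \<noteq> 0" "y 1 = a * x 1"
  shows "Z_HT m a x y =
      (sig (a^2))^2 * sig (a * inverse (x 1) * y (m+1)) * sig (a * inverse (x (m+1)) * y 1)
      * (\<Prod>i=2..m. (sig (a * inverse (x 1) * y i))^2 * (sig (a * inverse (x i) * y 1))^2)
      * Z_HT (m-1) a (\<lambda>i. x (i+1)) (\<lambda>i. y (i+1))"
proof -
  obtain n where m: "m = Suc n" using assms(1) by (cases m) auto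
  have "x 1 \<noteq> 0" using assms(3) by auto
  then show ?thesis
    using Z_transfer_reduce[of a x y n] assms(2,4) by (simp add: m Z_HT_eq_Z_transfer mult_ac)
qed

section \<open>Permutations generated by adjacent transpositions\<close>

lemma transpose_invariant_of_adjacent:
  fixes F :: "(nat \<Rightarrow> 'a) \<Rightarrow> 'b"
  assumes closed: "\<And>x c d. P x \<Longrightarrow> c \<in> {lo..hi} \<Longrightarrow> d \<in> {lo..hi} \<Longrightarrow> P (x \<circ> transpose c d)"
    and adj: "\<And>x i. P x \<Longrightarrow> lo \<le> i \<Longrightarrow> Suc i \<le> hi \<Longrightarrow> F (x \<circ> transpose i (Suc i)) = F x"
    and "P x" "c \<in> {lo..hi}" "d \<in> {lo..hi}"
  shows "F (x \<circ> transpose c d) = F x"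
proof -
  have shift: "F (x \<circ> transpose i (i + n)) = F x" if "P x" "lo \<le> i" "i + n \<le> hi" for n x i
    using that
  proof (induction n arbitrary: x)
    case 0
    then show ?case by simp
  next
    case (Suc n)
    show ?case
    proof (cases n)
      case 0
      then have "i + Suc n = Suc i" by simp
      then show ?thesis using adj[of x i] Suc.prems by metis
    next
      case (Suc n')
      define t where "t = transpose (i + n) (Suc (i + n))"
      have conj: "transpose i (i + Suc n) = t \<circ> transpose i (i + n) \<circ> t"
        using Suc by (auto simp: fun_eq_iff transpose_def t_def)
      have P_xt: "P (x \<circ> t)"
        unfolding t_def using Suc.prems by (intro closed) auto
      have "F (x \<circ> transpose i (i + Suc n)) = F ((x \<circ> t \<circ> transpose i (i + n)) \<circ> t)"
        unfolding conj by (simp only: comp_assoc)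
      also have "\<dots> = F (x \<circ> t \<circ> transpose i (i + n))"
        unfolding t_def using Suc.prems P_xt by (intro adj closed) (auto simp: t_def)
      also have "\<dots> = F (x \<circ> t)"
        using Suc.IH[OF P_xt] Suc.prems by (simp add: comp_def)
      also have "\<dots> = F x"
        unfolding t_def using Suc.prems by (intro adj) auto
      finally show ?thesis .
    qed
  qed
  show ?thesis
  proof (cases "c \<le> d")
    case True
    then show ?thesis using shift[where n = "d - c" and i = c] assms(3-5) by simp
  next
    case False
    then show ?thesis using shift[where n = "c - d" and i = d] assms(3-5) by (simp add: transpose_commute)
  qed
qed

lemma permutes_invariant_of_adjacent:
  fixes F :: "(nat \<Rightarrow> 'a) \<Rightarrow> 'b"
  assumes closed: "\<And>x c d. P x \<Longrightarrow> c \<in> {lo..hi} \<Longrightarrow> d \<in> {lo..hi} \<Longrightarrow> P (x \<circ> transpose c d)"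
    and adj: "\<And>x i. P x \<Longrightarrow> lo \<le> i \<Longrightarrow> Suc i \<le> hi \<Longrightarrow> F (x \<circ> transpose i (Suc i)) = F x"
    and "\<pi> permutes {lo..hi}" "P x"
  shows "F (x \<circ> \<pi>) = F x"
  using assms(3) finite_atLeastAtMost assms(4)
proof (induction arbitrary: x rule: permutes_induct)
  case (swap c d p)
  have P_xt: "P (x \<circ> transpose c d)"
    using swap closed by simp
  have "F (x \<circ> (transpose c d \<circ> p)) = F ((x \<circ> transpose c d) \<circ> p)"
    by (simp add: comp_assoc)
  also have "\<dots> = F (x \<circ> transpose c d)"
    using swap.IH[OF P_xt] by (simp add: comp_def)
  also have "\<dots> = F x"
    using swap by (intro transpose_invariant_of_adjacent[where P = P and F = F and lo = lo and hi = hi, OF closed adj]) auto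
  finally show ?case .
qed simp

lemma Z_HT_permute_x:
  assumes "a \<noteq> 0" "\<forall>i\<in>{1..m+1}. x i \<noteq> 0" "\<forall>i\<in>{1..m+1}. y i \<noteq> 0" "\<pi> permutes {1..m}"
  shows "Z_HT m a (x \<circ> \<pi>) y = Z_HT m a x y"
proof -
  have "Z_transfer m a (x \<circ> \<pi>) y = Z_transfer m a x y"
  proof (rule permutes_invariant_of_adjacent[where P = "\<lambda>x. \<forall>i\<in>{1..m+1}. x i \<noteq> 0"])
    show "\<forall>i\<in>{1..m+1}. (x \<circ> transpose c d) i \<noteq> 0"
      if "\<forall>i\<in>{1..m+1}. x i \<noteq> 0" "c \<in> {1..m}" "d \<in> {1..m}" for x :: "nat \<Rightarrow> complex" and c d
      using that by (auto simp: transpose_def)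
    show "Z_transfer m a (x \<circ> transpose i (Suc i)) y = Z_transfer m a x y"
      if "\<forall>i\<in>{1..m+1}. x i \<noteq> 0" "1 \<le> i" "Suc i \<le> m" for x i
      using Z_transfer_swap_x[OF assms(1) _ that(1) assms(3), of "i - 1"] that(2,3) by simp
  qed (use assms in auto)
  then show ?thesis by (simp add: Z_HT_eq_Z_transfer)
qed

lemma Z_HT_permute_y:
  assumes "a \<noteq> 0" "\<forall>i\<in>{1..m+1}. x i \<noteq> 0" "\<forall>i\<in>{1..m+1}. y i \<noteq> 0" "\<pi> permutes {1..m}"
  shows "Z_HT m a x (y \<circ> \<pi>) = Z_HT m a x y"
proof -
  have "Z_transfer m a x (y \<circ> \<pi>) = Z_transfer m a x y"
  proof (rule permutes_invariant_of_adjacent[where P = "\<lambda>y. \<forall>i\<in>{1..m+1}. y i \<noteq> 0"])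
    show "\<forall>i\<in>{1..m+1}. (y \<circ> transpose c d) i \<noteq> 0"
      if "\<forall>i\<in>{1..m+1}. y i \<noteq> 0" "c \<in> {1..m}" "d \<in> {1..m}" for y :: "nat \<Rightarrow> complex" and c d
      using that by (auto simp: transpose_def)
    show "Z_transfer m a x (y \<circ> transpose i (Suc i)) = Z_transfer m a x y"
      if "\<forall>i\<in>{1..m+1}. y i \<noteq> 0" "1 \<le> i" "Suc i \<le> m" for y i
      using Z_transfer_swap_y[OF assms(1) that(2,3) assms(2) that(1)] .
  qed (use assms in auto)
  then show ?thesis by (simp add: Z_HT_eq_Z_transfer)
qed

theorem lemma13:
  fixes m :: nat and a :: complex and x y :: "nat \<Rightarrow> complex"
  assumes "m \<ge> 1" and "a \<noteq> 0"
    and "\<forall>i\<in>{1..m+1}. x i \<noteq> 0" and "\<forall>i\<in>{1..m+1}. y i \<noteq> 0"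
  shows "(\<forall>\<pi>. \<pi> permutes {1..m} \<longrightarrow> Z_HT m a (x \<circ> \<pi>) y = Z_HT m a x y)
       \<and> (\<forall>\<pi>. \<pi> permutes {1..m} \<longrightarrow> Z_HT m a x (y \<circ> \<pi>) = Z_HT m a x y)
       \<and> (y 1 = a * x 1 \<longrightarrow>
            Z_HT m a x y =
              (sig (a^2))^2 * sig (a * inverse (x 1) * y (m+1)) * sig (a * inverse (x (m+1)) * y 1)
              * (\<Prod>i=2..m. (sig (a * inverse (x 1) * y i))^2 * (sig (a * inverse (x i) * y 1))^2)
              * Z_HT (m-1) a (\<lambda>i. x (i+1)) (\<lambda>i. y (i+1)))"
  using Z_HT_permute_x[OF assms(2-4)] Z_HT_permute_y[OF assms(2-4)] Z_HT_reduce[OF assms(1-3)]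
  by blast

end
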